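(* Let $\Xi\to C$ be a sequent without stoups (regarded, in the context of $\mathcal{M}'_{2018}$, as a sequent all of whose stoups are empty). Then the following are equivalent: (1) $\Xi\to C$ is derivable in $\mathcal{F}_{2018}$ without cut; (2) $\Xi\to C$ is derivable in $\mathcal{F}_{2018}$, possibly using cut; (3) $\Xi\to C$ is derivable in $\mathcal{M}'_{2018}$ extended with the stoup cut rule; (4) $\Xi\to C$ is derivable in $\mathcal{M}'_{2018}$ (without cut). The same equivalence holds with $\mathcal{F}^{-}_{2018}$ in place of $\mathcal{F}_{2018}$ and $\mathcal{M}'^{-}_{2018}$ in place of $\mathcal{M}'_{2018}$.
   Context: Formulae are built from a countable set of variables and $\mathbf1$ by $\backslash,/,\cdot,\wedge,\vee$ and the unary $\langle\rangle$, $[]^{-1}$, $!$. Calculi with stoups: a stoup is a finite multiset of formulae ($\varnothing$ empty); a tree term is a formula or $[\Xi]$; a meta-formula is $\zeta;\Gamma$ ($\zeta$ a stoup, $\Gamma$ a finite sequence of tree terms, empty $\Lambda$), $\varnothing;\Gamma$ written $\Gamma$; comma is concatenation / multiset union; sequents $\Xi\to C$; $\Xi(\Theta)$ designates an occurrence of a meta-formula $\Theta$ which is $\Xi$ itself or the content of a bracket $[\Theta]$ at any depth. Rules of $\mathcal{M}'_{2018}$: axioms $A\to A$, $\Lambda\to\mathbf1$; ($/L$) from $\zeta_1;\Gamma\to B$ and $\Xi(\zeta_2;\Delta_1,C,\Delta_2)\to D$ infer $\Xi(\zeta_1,\zeta_2;\Delta_1,C/B,\Gamma,\Delta_2)\to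 D$; ($/R$) from $\zeta;\Gamma,B\to C$ infer $\zeta;\Gamma\to C/B$; ($\backslash L$) from $\zeta_1;\Gamma\to A$ and $\Xi(\zeta_2;\Delta_1,C,\Delta_2)\to D$ infer $\Xi(\zeta_1,\zeta_2;\Delta_1,\Gamma,A\backslash C,\Delta_2)\to D$; ($\backslash R$) from $\zeta;A,\Gamma\to C$ infer $\zeta;\Gamma\to A\backslash C$; ($\cdot L$) from $\Xi(\zeta;\Delta_1,A,B,\Delta_2)\to D$ infer $\Xi(\zeta;\Delta_1,A\cdot B,\Delta_2)\to D$; ($\cdot R$) from $\zeta_1;\Delta\to A$, $\zeta_2;\Gamma\to B$ infer $\zeta_1,\zeta_2;\Delta,\Gamma\to A\cdot B$; ($\mathbf1L$) from $\Xi(\zeta;\Delta_1,\Delta_2)\to A$ infer $\Xi(\zeta;\Delta_1,\mathbf1,\Delta_2)\to A$; ($\vee L$) from $\Xi(\zeta;\Delta_1,A_1,\Delta_2)\to C$ and $\Xi(\zeta;\Delta_1,A_2,\Delta_2)\to C$ infer $\Xi(\zeta;\Delta_1,A_1\vee A_2,\Delta_2)\to C$; ($\vee R_i$) from $\Xi\to A_i$ infer $\Xi\to A_1\vee A_2$; ($\wedge L_i$) from $\Xi(\zeta;\Delta_1,A_i,\Delta_2)\to C$ infer $\Xi(\zeta;\Delta_1,A_1\wedge A_2,\Delta_2)\to C$; ($\wedge R$) from $\Xi\to A_1$ and $\Xi\to A_2$ infer $\Xi\to A_1\wedge A_2$; ($[]^{-1}L$) from $\Xi(\zeta;\Delta_1,A,\Delta_2)\to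 B$ infer $\Xi(\zeta;\Delta_1,[[]^{-1}A],\Delta_2)\to B$; ($[]^{-1}R$) from $[\Xi]\to A$ infer $\Xi\to[]^{-1}A$; ($\langle\rangle L$) from $\Xi(\zeta;\Delta_1,[A],\Delta_2)\to B$ infer $\Xi(\zeta;\Delta_1,\langle\rangle A,\Delta_2)\to B$; ($\langle\rangle R$) from $\Xi\to A$ infer $[\Xi]\to\langle\rangle A$; ($!L$) from $\Xi(\zeta,A;\Gamma_1,\Gamma_2)\to B$ infer $\Xi(\zeta;\Gamma_1,!A,\Gamma_2)\to B$; ($!P$) from $\Xi(\zeta;\Gamma_1,A,\Gamma_2)\to B$ infer $\Xi(\zeta,A;\Gamma_1,\Gamma_2)\to B$; ($!R'$) from $A;\Lambda\to B$ infer $A;\Lambda\to!B$; ($!C'$) from $\Xi(\zeta,A;\Gamma_1,[\zeta',A;\Gamma_2],\Gamma_3)\to B$ infer $\Xi(\zeta,A;\Gamma_1,[[\zeta';\Gamma_2]],\Gamma_3)\to B$. $\mathcal{M}'^{-}_{2018}$ is $\mathcal{M}'_{2018}$ restricted to formulae without $\mathbf1$, without $\Lambda\to\mathbf1$ and $\mathbf1L$, with $\backslash R,/R$ only if $\Gamma\ne\Lambda$ or $\zeta\ne\varnothing$, and $!C'$ only if $\Gamma_2\ne\Lambda$ or $\zeta'\neq\varnothing$. The stoup cut rule is: from $\xi;\Pi\to A$ and $\Xi(\zeta;\Gamma_1,A,\Gamma_2)\to C$ infer $\Xi(\xi,\zeta;\Gamma_1,\Pi,\Gamma_2)\to C$.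 Stoup-free calculi: meta-formulae are finite sequences of tree terms (all stoups empty); rules of $\mathcal{F}_{2018}$ are the stoup-free versions of the rules above other than $!L,!P,!R',!C'$ (drop all stoups), together with ($!L$) from $\Xi(\Delta_1,A,\Delta_2)\to C$ infer $\Xi(\Delta_1,!A,\Delta_2)\to C$; ($!P_1$) from $\Xi(\Delta_1,!A,\Phi,\Delta_2)\to C$ infer $\Xi(\Delta_1,\Phi,!A,\Delta_2)\to C$; ($!P_2$) the converse; ($!R$) from $!A\to B$ infer $!A\to!B$; ($!C$) from $\Xi(!A,\Gamma_1,[!A,\Gamma_2],\Gamma_3)\to C$ infer $\Xi(!A,\Gamma_1,[[\Gamma_2]],\Gamma_3)\to C$; and the cut rule: from $\Pi\to A$ and $\Xi(\Gamma_1,A,\Gamma_2)\to C$ infer $\Xi(\Gamma_1,\Pi,\Gamma_2)\to C$. $\mathcal{F}^{-}_{2018}$ is $\mathcal{F}_{2018}$ restricted to formulae without $\mathbf1$, without $\Lambda\to\mathbf1$ and $\mathbf1L$, with $\backslash R,/R$ only if $\Gamma\neq\Lambda$, and $!C$ only if $\Gamma_2\neq\Lambda$. *)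

theory Defs
  imports Main "HOL-Library.Multiset"
begin

text \<open>Formulae built from variables and One by the binary connectives
  Under A C (written A\C), Over C B (written C/B), Prod (product), And, Or
  and the unary Dia (angle brackets), Box (bracket inverse) and Bang (exponential).\<close>

datatype formula =
    Var nat
  | One
  | Under formula formula
  | Over formula formula
  | Prod formula formula
  | And formula formula
  | Or formula formula
  | Dia formula
  | Box formula
  | Bang formula

type_synonym stoup = "formula multiset"

datatype tterm = Fm formula | Br "stoup \<times> tterm list"

type_synonym meta = "stoup \<times> tterm list"

type_synonym sequent = "meta \<times> formula"

text \<open>Contexts with one distinguished meta-formula occurrence (the hole):
  either the whole meta-formula, or the content of a bracket at any depth.\<close>

datatype ctx = Hole | CBr stoup "tterm list" ctx "tterm list"

fun fill :: "ctx \<Rightarrow> meta \<Rightarrow> meta" where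
  "fill Hole T = T"
| "fill (CBr z G1 c G2) T = (z, G1 @ [Br (fill c T)] @ G2)"

fun sfree_t :: "tterm \<Rightarrow> bool" where
  "sfree_t (Fm A) = True"
| "sfree_t (Br (z, G)) = (z = {#} \<and> (\<forall>t\<in>set G. sfree_t t))"

definition sfree :: "meta \<Rightarrow> bool" where
  "sfree M = (fst M = {#} \<and> (\<forall>t\<in>set (snd M). sfree_t t))"

fun onefree :: "formula \<Rightarrow> bool" where
  "onefree (Var n) = True"
| "onefree One = False"
| "onefree (Under A B) = (onefree A \<and> onefree B)"
| "onefree (Over A B) = (onefree A \<and> onefree B)"
| "onefree (Prod A B) = (onefree A \<and> onefree B)"
| "onefree (And A B) = (onefree A \<and> onefree B)"
| "onefree (Or A B) = (onefree A \<and> onefree B)"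
| "onefree (Dia A) = onefree A"
| "onefree (Box A) = onefree A"
| "onefree (Bang A) = onefree A"

fun onefree_t :: "tterm \<Rightarrow> bool" where
  "onefree_t (Fm A) = onefree A"
| "onefree_t (Br (z, G)) = ((\<forall>A\<in>#z. onefree A) \<and> (\<forall>t\<in>set G. onefree_t t))"

definition onefree_seq :: "sequent \<Rightarrow> bool" where
  "onefree_seq S = (case S of ((z, G), C) \<Rightarrow>
      (\<forall>A\<in>#z. onefree A) \<and> (\<forall>t\<in>set G. onefree_t t) \<and> onefree C)"

text \<open>Flag r = True selects the restricted calculus M'-2018
  (side conditions on slash-right rules and contraction, no One rules);
  flag c = True adds the stoup cut rule.\<close>

inductive mrule :: "bool \<Rightarrow> bool \<Rightarrow> sequent list \<Rightarrow> sequent \<Rightarrow> bool" for r c where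
  m_ax: "mrule r c [] (({#}, [Fm A]), A)"
| m_oneR: "\<not> r \<Longrightarrow> mrule r c [] (({#}, []), One)"
| m_overL: "mrule r c [((z1, G), B), (fill X (z2, D1 @ [Fm C] @ D2), D)]
      (fill X (z1 + z2, D1 @ [Fm (Over C B)] @ G @ D2), D)"
| m_overR: "(r \<longrightarrow> G \<noteq> [] \<or> z \<noteq> {#}) \<Longrightarrow>
      mrule r c [((z, G @ [Fm B]), C)] ((z, G), Over C B)"
| m_underL: "mrule r c [((z1, G), A), (fill X (z2, D1 @ [Fm C] @ D2), D)]
      (fill X (z1 + z2, D1 @ G @ [Fm (Under A C)] @ D2), D)"
| m_underR: "(r \<longrightarrow> G \<noteq> [] \<or> z \<noteq> {#}) \<Longrightarrow>
      mrule r c [((z, Fm A # G), C)] ((z, G), Under A C)"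
| m_prodL: "mrule r c [(fill X (z, D1 @ [Fm A, Fm B] @ D2), D)]
      (fill X (z, D1 @ [Fm (Prod A B)] @ D2), D)"
| m_prodR: "mrule r c [((z1, D), A), ((z2, G), B)] ((z1 + z2, D @ G), Prod A B)"
| m_oneL: "\<not> r \<Longrightarrow> mrule r c [(fill X (z, D1 @ D2), A)]
      (fill X (z, D1 @ [Fm One] @ D2), A)"
| m_orL: "mrule r c [(fill X (z, D1 @ [Fm A1] @ D2), C), (fill X (z, D1 @ [Fm A2] @ D2), C)]
      (fill X (z, D1 @ [Fm (Or A1 A2)] @ D2), C)"
| m_orR1: "mrule r c [(Y, A1)] (Y, Or A1 A2)"
| m_orR2: "mrule r c [(Y, A2)] (Y, Or A1 A2)"
| m_andL1: "mrule r c [(fill X (z, D1 @ [Fm A1] @ D2), C)]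
      (fill X (z, D1 @ [Fm (And A1 A2)] @ D2), C)"
| m_andL2: "mrule r c [(fill X (z, D1 @ [Fm A2] @ D2), C)]
      (fill X (z, D1 @ [Fm (And A1 A2)] @ D2), C)"
| m_andR: "mrule r c [(Y, A1), (Y, A2)] (Y, And A1 A2)"
| m_boxL: "mrule r c [(fill X (z, D1 @ [Fm A] @ D2), B)]
      (fill X (z, D1 @ [Br ({#}, [Fm (Box A)])] @ D2), B)"
| m_boxR: "mrule r c [(({#}, [Br Y]), A)] (Y, Box A)"
| m_diaL: "mrule r c [(fill X (z, D1 @ [Br ({#}, [Fm A])] @ D2), B)]
      (fill X (z, D1 @ [Fm (Dia A)] @ D2), B)"
| m_diaR: "mrule r c [(Y, A)] (({#}, [Br Y]), Dia A)"
| m_bangL: "mrule r c [(fill X (z + {#A#}, G1 @ G2), B)]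
      (fill X (z, G1 @ [Fm (Bang A)] @ G2), B)"
| m_bangP: "mrule r c [(fill X (z, G1 @ [Fm A] @ G2), B)]
      (fill X (z + {#A#}, G1 @ G2), B)"
| m_bangR: "mrule r c [(({#A#}, []), B)] (({#A#}, []), Bang B)"
| m_bangC: "(r \<longrightarrow> G2 \<noteq> [] \<or> z' \<noteq> {#}) \<Longrightarrow>
      mrule r c [(fill X (z + {#A#}, G1 @ [Br (z' + {#A#}, G2)] @ G3), B)]
      (fill X (z + {#A#}, G1 @ [Br ({#}, [Br (z', G2)])] @ G3), B)"
| m_cut: "c \<Longrightarrow> mrule r c [((xi, P), A), (fill X (z, G1 @ [Fm A] @ G2), C)]
      (fill X (xi + z, G1 @ P @ G2), C)"

inductive mder :: "bool \<Rightarrow> bool \<Rightarrow> sequent \<Rightarrow> bool" for r c where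
  "mrule r c ps s \<Longrightarrow> (\<forall>p\<in>set ps. mder r c p) \<Longrightarrow> (r \<longrightarrow> onefree_seq s) \<Longrightarrow> mder r c s"

inductive frule :: "bool \<Rightarrow> bool \<Rightarrow> sequent list \<Rightarrow> sequent \<Rightarrow> bool" for r c where
  f_ax: "frule r c [] (({#}, [Fm A]), A)"
| f_oneR: "\<not> r \<Longrightarrow> frule r c [] (({#}, []), One)"
| f_overL: "frule r c [(({#}, G), B), (fill X ({#}, D1 @ [Fm C] @ D2), D)]
      (fill X ({#}, D1 @ [Fm (Over C B)] @ G @ D2), D)"
| f_overR: "(r \<longrightarrow> G \<noteq> []) \<Longrightarrow>
      frule r c [(({#}, G @ [Fm B]), C)] (({#}, G), Over C B)"
| f_underL: "frule r c [(({#}, G), A), (fill X ({#}, D1 @ [Fm C] @ D2), D)]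
      (fill X ({#}, D1 @ G @ [Fm (Under A C)] @ D2), D)"
| f_underR: "(r \<longrightarrow> G \<noteq> []) \<Longrightarrow>
      frule r c [(({#}, Fm A # G), C)] (({#}, G), Under A C)"
| f_prodL: "frule r c [(fill X ({#}, D1 @ [Fm A, Fm B] @ D2), D)]
      (fill X ({#}, D1 @ [Fm (Prod A B)] @ D2), D)"
| f_prodR: "frule r c [(({#}, D), A), (({#}, G), B)] (({#}, D @ G), Prod A B)"
| f_oneL: "\<not> r \<Longrightarrow> frule r c [(fill X ({#}, D1 @ D2), A)]
      (fill X ({#}, D1 @ [Fm One] @ D2), A)"
| f_orL: "frule r c [(fill X ({#}, D1 @ [Fm A1] @ D2), C), (fill X ({#}, D1 @ [Fm A2] @ D2), C)]
      (fill X ({#}, D1 @ [Fm (Or A1 A2)] @ D2), C)"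
| f_orR1: "frule r c [(Y, A1)] (Y, Or A1 A2)"
| f_orR2: "frule r c [(Y, A2)] (Y, Or A1 A2)"
| f_andL1: "frule r c [(fill X ({#}, D1 @ [Fm A1] @ D2), C)]
      (fill X ({#}, D1 @ [Fm (And A1 A2)] @ D2), C)"
| f_andL2: "frule r c [(fill X ({#}, D1 @ [Fm A2] @ D2), C)]
      (fill X ({#}, D1 @ [Fm (And A1 A2)] @ D2), C)"
| f_andR: "frule r c [(Y, A1), (Y, A2)] (Y, And A1 A2)"
| f_boxL: "frule r c [(fill X ({#}, D1 @ [Fm A] @ D2), B)]
      (fill X ({#}, D1 @ [Br ({#}, [Fm (Box A)])] @ D2), B)"
| f_boxR: "frule r c [(({#}, [Br Y]), A)] (Y, Box A)"
| f_diaL: "frule r c [(fill X ({#}, D1 @ [Br ({#}, [Fm A])] @ D2), B)]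
      (fill X ({#}, D1 @ [Fm (Dia A)] @ D2), B)"
| f_diaR: "frule r c [(Y, A)] (({#}, [Br Y]), Dia A)"
| f_bangL: "frule r c [(fill X ({#}, D1 @ [Fm A] @ D2), C)]
      (fill X ({#}, D1 @ [Fm (Bang A)] @ D2), C)"
| f_bangP1: "frule r c [(fill X ({#}, D1 @ [Fm (Bang A)] @ Phi @ D2), C)]
      (fill X ({#}, D1 @ Phi @ [Fm (Bang A)] @ D2), C)"
| f_bangP2: "frule r c [(fill X ({#}, D1 @ Phi @ [Fm (Bang A)] @ D2), C)]
      (fill X ({#}, D1 @ [Fm (Bang A)] @ Phi @ D2), C)"
| f_bangR: "frule r c [(({#}, [Fm (Bang A)]), B)] (({#}, [Fm (Bang A)]), Bang B)"
| f_bangC: "(r \<longrightarrow> G2 \<noteq> []) \<Longrightarrow>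
      frule r c [(fill X ({#}, Fm (Bang A) # G1 @ [Br ({#}, Fm (Bang A) # G2)] @ G3), C)]
      (fill X ({#}, Fm (Bang A) # G1 @ [Br ({#}, [Br ({#}, G2)])] @ G3), C)"
| f_cut: "c \<Longrightarrow> frule r c [(({#}, P), A), (fill X ({#}, G1 @ [Fm A] @ G2), C)]
      (fill X ({#}, G1 @ P @ G2), C)"

inductive fder :: "bool \<Rightarrow> bool \<Rightarrow> sequent \<Rightarrow> bool" for r c where
  "frule r c ps s \<Longrightarrow> (\<forall>p\<in>set ps. fder r c p) \<Longrightarrow> sfree (fst s) \<Longrightarrow>
   (r \<longrightarrow> onefree_seq s) \<Longrightarrow> fder r c s"

end

theory Submission
  imports Defs
begin

text \<open>(1) \<Rightarrow> (2) is trivial.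
  (2) \<Rightarrow> (3): every rule of F is derivable in M' with stoup cut. A formula !A of the list is
  moved into the stoup by a cut against A; \<Lambda> \<rightarrow> !A (derived by !P and !R'), which gives the
  permutation rules, !R and !C of F.
  (3) \<Rightarrow> (4) is cut elimination for M', by induction on the cut formula, then on the derivation
  of the left premise (commuting the cut upwards while the cut formula is not principal there),
  then on the derivation of the right premise, until the cut formula is principal on both sides
  and the cut is replaced by cuts on its immediate subformulae. In the principal case for !B the
  left premise A'; \<Lambda> \<rightarrow> !B comes by !R' from A'; \<Lambda> \<rightarrow> B, and the cut replaces stoup
  occurrences of B by A' throughout the right derivation; wherever !P moves such an occurrence
  into the list, a cut on the smaller formula B restores A'.
  (4) \<Rightarrow> (1): writing each stoup formula A as !A at the front of its list maps M' derivations to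
  cut-free F derivations; the stoup rules become !L and permutations of banged formulae, and
  !C' becomes !C.
  In the restricted calculi all constructions preserve One-freeness and non-empty antecedents;
  the latter is an invariant of M'^- and keeps the side conditions of the slash rules and of
  contraction valid after a cut.\<close>

definition onefree_meta :: "meta \<Rightarrow> bool" where
  "onefree_meta M = ((\<forall>A\<in>#fst M. onefree A) \<and> (\<forall>t\<in>set (snd M). onefree_t t))"

fun onefree_ctx :: "ctx \<Rightarrow> bool" where
  "onefree_ctx Hole = True"
| "onefree_ctx (CBr z G1 X G2) = ((\<forall>A\<in>#z. onefree A) \<and> (\<forall>t\<in>set G1. onefree_t t) \<and>
     onefree_ctx X \<and> (\<forall>t\<in>set G2. onefree_t t))"

lemma onefree_seq_iff: "onefree_seq (M, C) = (onefree_meta M \<and> onefree C)"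
  by (cases M) (auto simp: onefree_seq_def onefree_meta_def)

lemma onefree_t_Br: "onefree_t (Br N) = onefree_meta N"
  by (cases N) (auto simp: onefree_meta_def)

lemma onefree_meta_pair:
  "onefree_meta (z, L) = ((\<forall>A\<in>#z. onefree A) \<and> (\<forall>t\<in>set L. onefree_t t))"
  by (simp add: onefree_meta_def)

lemma onefree_meta_fill: "onefree_meta (fill X N) = (onefree_ctx X \<and> onefree_meta N)"
  by (induction X) (auto simp: onefree_meta_pair onefree_t_Br)

fun nonempty_t :: "tterm \<Rightarrow> bool" where
  "nonempty_t (Fm A) = True"
| "nonempty_t (Br (z, G)) = ((z \<noteq> {#} \<or> G \<noteq> []) \<and> (\<forall>t\<in>set G. nonempty_t t))"

definition nonempty_meta :: "meta \<Rightarrow> bool" where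
  "nonempty_meta M = ((fst M \<noteq> {#} \<or> snd M \<noteq> []) \<and> (\<forall>t\<in>set (snd M). nonempty_t t))"

fun nonempty_ctx :: "ctx \<Rightarrow> bool" where
  "nonempty_ctx Hole = True"
| "nonempty_ctx (CBr z G1 X G2) = ((\<forall>t\<in>set G1. nonempty_t t) \<and> nonempty_ctx X \<and> (\<forall>t\<in>set G2. nonempty_t t))"

lemma nonempty_t_Br: "nonempty_t (Br N) = nonempty_meta N"
  by (cases N) (simp add: nonempty_meta_def)

lemma nonempty_meta_fill: "nonempty_meta (fill X N) = (nonempty_ctx X \<and> nonempty_meta N)"
  by (induction X) (simp_all add: nonempty_meta_def nonempty_t_Br, blast)

fun ctx_comp :: "ctx \<Rightarrow> ctx \<Rightarrow> ctx" where
  "ctx_comp Hole Y = Y"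
| "ctx_comp (CBr z G1 X G2) Y = CBr z G1 (ctx_comp X Y) G2"

lemma fill_ctx_comp: "fill (ctx_comp X Y) N = fill X (fill Y N)"
  by (induction X) auto

fun sfree_ctx :: "ctx \<Rightarrow> bool" where
  "sfree_ctx Hole = True"
| "sfree_ctx (CBr z G1 c G2) = (z = {#} \<and> (\<forall>t\<in>set G1. sfree_t t) \<and> sfree_ctx c \<and> (\<forall>t\<in>set G2. sfree_t t))"

lemma sfree_t_Br: "sfree_t (Br N) = sfree N"
  by (cases N) (simp add: sfree_def)

lemma sfree_pair: "sfree (z, L) = (z = {#} \<and> (\<forall>t\<in>set L. sfree_t t))"
  by (simp add: sfree_def)

lemma sfree_fill: "sfree (fill X N) = (sfree_ctx X \<and> sfree N)"
  by (induction X) (auto simp: sfree_pair sfree_t_Br)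

lemma mder_ruleI:
  "mrule r c ps s \<Longrightarrow> (\<And>p. p \<in> set ps \<Longrightarrow> mder r c p) \<Longrightarrow>
    (r \<Longrightarrow> onefree_seq s) \<Longrightarrow> mder r c s"
  by (rule mder.intros) auto

lemma mder_onefree: "mder r c s \<Longrightarrow> r \<Longrightarrow> onefree_seq s"
  by (induction rule: mder.induct) auto

lemma mder_restricted_nonempty: "mder True c s \<Longrightarrow> nonempty_meta (fst s)"
proof (induction rule: mder.induct)
  case (1 ps s)
  from 1(1) have "(\<forall>p\<in>set ps. nonempty_meta (fst p)) \<longrightarrow> nonempty_meta (fst s)"
    by (cases rule: mrule.cases)
      (simp_all add: nonempty_meta_fill, simp_all add: nonempty_meta_def nonempty_t_Br, blast+)
  then show ?case using 1 by blast
qed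

lemma mder_restricted_antecedent:
  "mder r c (M, A) \<Longrightarrow> r \<Longrightarrow> fst M \<noteq> {#} \<or> snd M \<noteq> []"
  using mder_restricted_nonempty[of c "(M, A)"] by (simp add: nonempty_meta_def)


lemma mder_overL:
  "mder r c ((z1, G), B) \<Longrightarrow> mder r c (fill X (z2, D1 @ Fm C # D2), D) \<Longrightarrow>
    (r \<Longrightarrow> onefree_seq (fill X (z1 + z2, D1 @ Fm (Over C B) # G @ D2), D)) \<Longrightarrow>
    mder r c (fill X (z1 + z2, D1 @ Fm (Over C B) # G @ D2), D)"
  using mder_ruleI[OF m_overL[of r c z1 G B X z2 D1 C D2 D]] by fastforce

lemma mder_underL:
  "mder r c ((z1, G), A) \<Longrightarrow> mder r c (fill X (z2, D1 @ Fm C # D2), D) \<Longrightarrow>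
    (r \<Longrightarrow> onefree_seq (fill X (z1 + z2, D1 @ G @ Fm (Under A C) # D2), D)) \<Longrightarrow>
    mder r c (fill X (z1 + z2, D1 @ G @ Fm (Under A C) # D2), D)"
  using mder_ruleI[OF m_underL[of r c z1 G A X z2 D1 C D2 D]] by fastforce

lemma mder_prodL: "mder r c (fill X (z, D1 @ Fm A # Fm B # D2), D) \<Longrightarrow>
  (r \<Longrightarrow> onefree_seq (fill X (z, D1 @ Fm (Prod A B) # D2), D)) \<Longrightarrow>
  mder r c (fill X (z, D1 @ Fm (Prod A B) # D2), D)"
  using mder_ruleI[OF m_prodL[of r c X z D1 A B D2 D]] by simp

lemma mder_oneL: "\<not> r \<Longrightarrow> mder r c (fill X (z, D1 @ D2), A) \<Longrightarrow>
  mder r c (fill X (z, D1 @ Fm One # D2), A)"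
  using mder_ruleI[OF m_oneL[of r c X z D1 D2 A]] by simp

lemma mder_orL:
  "mder r c (fill X (z, D1 @ Fm A1 # D2), C) \<Longrightarrow>
    mder r c (fill X (z, D1 @ Fm A2 # D2), C) \<Longrightarrow>
    (r \<Longrightarrow> onefree_seq (fill X (z, D1 @ Fm (Or A1 A2) # D2), C)) \<Longrightarrow>
    mder r c (fill X (z, D1 @ Fm (Or A1 A2) # D2), C)"
  using mder_ruleI[OF m_orL[of r c X z D1 A1 D2 C A2]] by fastforce

lemma mder_andL1: "mder r c (fill X (z, D1 @ Fm A1 # D2), C) \<Longrightarrow>
  (r \<Longrightarrow> onefree_seq (fill X (z, D1 @ Fm (And A1 A2) # D2), C)) \<Longrightarrow>
  mder r c (fill X (z, D1 @ Fm (And A1 A2) # D2), C)"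
  using mder_ruleI[OF m_andL1[of r c X z D1 A1 D2 C A2]] by simp

lemma mder_andL2: "mder r c (fill X (z, D1 @ Fm A2 # D2), C) \<Longrightarrow>
  (r \<Longrightarrow> onefree_seq (fill X (z, D1 @ Fm (And A1 A2) # D2), C)) \<Longrightarrow>
  mder r c (fill X (z, D1 @ Fm (And A1 A2) # D2), C)"
  using mder_ruleI[OF m_andL2[of r c X z D1 A2 D2 C A1]] by simp

lemma mder_boxL:
  "mder r c (fill X (z, D1 @ Fm A # D2), B) \<Longrightarrow>
    (r \<Longrightarrow> onefree_seq (fill X (z, D1 @ Br ({#}, [Fm (Box A)]) # D2), B)) \<Longrightarrow>
    mder r c (fill X (z, D1 @ Br ({#}, [Fm (Box A)]) # D2), B)"
  using mder_ruleI[OF m_boxL[of r c X z D1 A D2 B]] by simp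

lemma mder_diaL: "mder r c (fill X (z, D1 @ Br ({#}, [Fm A]) # D2), B) \<Longrightarrow>
  (r \<Longrightarrow> onefree_seq (fill X (z, D1 @ Fm (Dia A) # D2), B)) \<Longrightarrow>
  mder r c (fill X (z, D1 @ Fm (Dia A) # D2), B)"
  using mder_ruleI[OF m_diaL[of r c X z D1 A D2 B]] by simp

lemma mder_bangL: "mder r c (fill X (z + {#A#}, G1 @ G2), B) \<Longrightarrow>
  (r \<Longrightarrow> onefree_seq (fill X (z, G1 @ Fm (Bang A) # G2), B)) \<Longrightarrow>
  mder r c (fill X (z, G1 @ Fm (Bang A) # G2), B)"
  using mder_ruleI[OF m_bangL[of r c X z A G1 G2 B]] by simp

lemma mder_bangP: "mder r c (fill X (z, G1 @ Fm A # G2), B) \<Longrightarrow>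
  (r \<Longrightarrow> onefree_seq (fill X (z + {#A#}, G1 @ G2), B)) \<Longrightarrow>
  mder r c (fill X (z + {#A#}, G1 @ G2), B)"
  using mder_ruleI[OF m_bangP[of r c X z G1 A G2 B]] by simp

lemma mder_bangC:
  "(r \<longrightarrow> G2 \<noteq> [] \<or> z' \<noteq> {#}) \<Longrightarrow>
    mder r c (fill X (z + {#A#}, G1 @ Br (z' + {#A#}, G2) # G3), B) \<Longrightarrow>
    (r \<Longrightarrow> onefree_seq (fill X (z + {#A#}, G1 @ Br ({#}, [Br (z', G2)]) # G3), B)) \<Longrightarrow>
    mder r c (fill X (z + {#A#}, G1 @ Br ({#}, [Br (z', G2)]) # G3), B)"
  using mder_ruleI[OF m_bangC[of r G2 z' c X z A G1 G3 B]] by simp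

lemma mder_overR:
  "(r \<longrightarrow> G \<noteq> [] \<or> z \<noteq> {#}) \<Longrightarrow>
    mder r c ((z, G @ [Fm B]), C) \<Longrightarrow>
    (r \<Longrightarrow> onefree_seq ((z, G), Over C B)) \<Longrightarrow>
    mder r c ((z, G), Over C B)"
  using mder_ruleI[OF m_overR[of r G z c B C]] by simp

lemma mder_underR:
  "(r \<longrightarrow> G \<noteq> [] \<or> z \<noteq> {#}) \<Longrightarrow>
    mder r c ((z, Fm A # G), C) \<Longrightarrow>
    (r \<Longrightarrow> onefree_seq ((z, G), Under A C)) \<Longrightarrow>
    mder r c ((z, G), Under A C)"
  using mder_ruleI[OF m_underR[of r G z c A C]] by simp

lemma mder_prodR:
  "mder r c ((z1, D), A) \<Longrightarrow> mder r c ((z2, G), B) \<Longrightarrow>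
    (r \<Longrightarrow> onefree_seq ((z1 + z2, D @ G), Prod A B)) \<Longrightarrow>
    mder r c ((z1 + z2, D @ G), Prod A B)"
  using mder_ruleI[OF m_prodR[of r c z1 D A z2 G B]] by fastforce

lemma mder_orR1:
  "mder r c (Y, A1) \<Longrightarrow> (r \<Longrightarrow> onefree_seq (Y, Or A1 A2)) \<Longrightarrow>
    mder r c (Y, Or A1 A2)"
  using mder_ruleI[OF m_orR1[of r c Y A1 A2]] by simp

lemma mder_orR2:
  "mder r c (Y, A2) \<Longrightarrow> (r \<Longrightarrow> onefree_seq (Y, Or A1 A2)) \<Longrightarrow>
    mder r c (Y, Or A1 A2)"
  using mder_ruleI[OF m_orR2[of r c Y A2 A1]] by simp

lemma mder_andR:
  "mder r c (Y, A1) \<Longrightarrow> mder r c (Y, A2) \<Longrightarrow>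
    (r \<Longrightarrow> onefree_seq (Y, And A1 A2)) \<Longrightarrow> mder r c (Y, And A1 A2)"
  using mder_ruleI[OF m_andR[of r c Y A1 A2]] by fastforce

lemma mder_boxR:
  "mder r c (({#}, [Br Y]), A) \<Longrightarrow> (r \<Longrightarrow> onefree_seq (Y, Box A)) \<Longrightarrow>
    mder r c (Y, Box A)"
  using mder_ruleI[OF m_boxR[of r c Y A]] by simp

lemma mder_diaR:
  "mder r c (Y, A) \<Longrightarrow> (r \<Longrightarrow> onefree_seq (({#}, [Br Y]), Dia A)) \<Longrightarrow>
    mder r c (({#}, [Br Y]), Dia A)"
  using mder_ruleI[OF m_diaR[of r c Y A]] by simp

lemma mder_bangR:
  "mder r c (({#A#}, []), B) \<Longrightarrow>
    (r \<Longrightarrow> onefree_seq (({#A#}, []), Bang B)) \<Longrightarrow>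
    mder r c (({#A#}, []), Bang B)"
  using mder_ruleI[OF m_bangR[of r c A B]] by simp

lemma mder_axI: "(r \<Longrightarrow> onefree A) \<Longrightarrow> mder r c (({#}, [Fm A]), A)"
  using mder_ruleI[OF m_ax[of r c A]] by (simp add: onefree_seq_def)

lemma mder_cut:
  "c \<Longrightarrow> mder r c ((xi, P), A) \<Longrightarrow>
    mder r c (fill X (z, G1 @ Fm A # G2), C) \<Longrightarrow>
    (r \<Longrightarrow> onefree_seq (fill X (xi + z, G1 @ P @ G2), C)) \<Longrightarrow>
    mder r c (fill X (xi + z, G1 @ P @ G2), C)"
  using mder_ruleI[OF m_cut[of c r xi P A X z G1 G2 C]] by fastforce


text \<open>repl A M S S' holds if S' is the conclusion of a stoup cut of M \<rightarrow> A against S.\<close>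

inductive repl :: "formula \<Rightarrow> meta \<Rightarrow> meta \<Rightarrow> meta \<Rightarrow> bool" for A M where
  repl_here: "repl A M (z, G1 @ Fm A # G2) (fst M + z, G1 @ snd M @ G2)"
| repl_deep: "repl A M N N' \<Longrightarrow> repl A M (z, G1 @ Br N # G2) (z, G1 @ Br N' # G2)"

definition replL :: "formula \<Rightarrow> meta \<Rightarrow> stoup \<Rightarrow> tterm list \<Rightarrow> tterm list \<Rightarrow> bool" where
  "replL A M d L L' = (\<forall>w. repl A M (w, L) (d + w, L'))"

lemma repl_hereI:
  "L = Ga @ Fm A # Gb \<Longrightarrow> L' = Ga @ snd M @ Gb \<Longrightarrow> w' = fst M + w \<Longrightarrow>
    repl A M (w, L) (w', L')"
  by (simp add: repl_here)

lemma repl_deepI: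
  "repl A M N N' \<Longrightarrow> L = Ga @ Br N # Gb \<Longrightarrow> L' = Ga @ Br N' # Gb \<Longrightarrow>
    repl A M (w, L) (w, L')"
  by (simp add: repl_deep)

lemma repl_pair_replL:
  assumes "repl A M (w, L) N"
  shows "\<exists>d L'. N = (d + w, L') \<and> replL A M d L L'"
  using assms
proof cases
  case (repl_here G1 G2)
  then show ?thesis by (auto simp: replL_def intro!: repl.repl_here)
next
  case (repl_deep N1 N1' G1 G2)
  then show ?thesis by (auto simp: replL_def intro!: repl.repl_deep)
qed

lemma replL_repl: "replL A M d L L' \<Longrightarrow> repl A M (w, L) (d + w, L')"
  by (simp add: replL_def)

lemma replL_frame: "replL A M d L L' \<Longrightarrow> replL A M d (L0 @ L @ L2) (L0 @ L' @ L2)"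
  unfolding replL_def
proof
  fix w
  assume "\<forall>w. repl A M (w, L) (d + w, L')"
  then have "repl A M (w, L) (d + w, L')" ..
  then show "repl A M (w, L0 @ L @ L2) (d + w, L0 @ L' @ L2)"
  proof cases
    case (repl_here G1 G2)
    then show ?thesis by (intro repl_hereI[where Ga = "L0 @ G1" and Gb = "G2 @ L2"]) auto
  next
    case (repl_deep N N' G1 G2)
    then have "d = {#}" by simp
    with repl_deep show ?thesis
      using repl_deepI[of A M N N' "L0 @ L @ L2" "L0 @ G1" "G2 @ L2" "L0 @ L' @ L2" w] by simp
  qed
qed

lemma append_eq_append_Cons_iff:
  "L1 @ L2 = G1 @ x # G2 \<longleftrightarrow> (\<exists>u. L1 = G1 @ x # u \<and> G2 = u @ L2) \<or> (\<exists>u. L2 = u @ x # G2 \<and> G1 = L1 @ u)"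
  by (auto simp: append_eq_append_conv2 Cons_eq_append_conv append_eq_Cons_conv)

lemma replL_append_cases: "replL A M d (L1 @ L2) L' \<Longrightarrow>
   (\<exists>L1'. L' = L1' @ L2 \<and> replL A M d L1 L1') \<or> (\<exists>L2'. L' = L1 @ L2' \<and> replL A M d L2 L2')"
proof -
  assume a: "replL A M d (L1 @ L2) L'"
  then have "repl A M ({#}, L1 @ L2) (d, L')" using a[unfolded replL_def, rule_format, of "{#}"] by simp
  then show ?thesis
  proof (rule repl.cases)
    fix z G1 G2
    assume h: "({#}, L1 @ L2) = (z, G1 @ Fm A # G2)" "(d, L') = (fst M + z, G1 @ snd M @ G2)"
    then have "L1 @ L2 = G1 @ Fm A # G2" by simp
    then show ?thesis unfolding append_eq_append_Cons_iff
    proof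
      assume "\<exists>u. L1 = G1 @ Fm A # u \<and> G2 = u @ L2"
      then obtain u where "L1 = G1 @ Fm A # u" "G2 = u @ L2" by blast
      then show ?thesis using h
        by (intro disjI1 exI[of _ "G1 @ snd M @ u"]) (auto simp: replL_def intro!: repl_hereI[where Ga=G1 and Gb=u])
    next
      assume "\<exists>u. L2 = u @ Fm A # G2 \<and> G1 = L1 @ u"
      then obtain u where "L2 = u @ Fm A # G2" "G1 = L1 @ u" by blast
      then show ?thesis using h
        by (intro disjI2 exI[of _ "u @ snd M @ G2"]) (auto simp: replL_def intro!: repl_hereI[where Ga=u and Gb=G2])
    qed
  next
    fix N N' z G1 G2
    assume h: "({#}, L1 @ L2) = (z, G1 @ Br N # G2)" "(d, L') = (z, G1 @ Br N' # G2)" "repl A M N N'"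
    then have "L1 @ L2 = G1 @ Br N # G2" by simp
    then show ?thesis unfolding append_eq_append_Cons_iff
    proof
      assume "\<exists>u. L1 = G1 @ Br N # u \<and> G2 = u @ L2"
      then obtain u where "L1 = G1 @ Br N # u" "G2 = u @ L2" by blast
      then show ?thesis using h
        by (intro disjI1 exI[of _ "G1 @ Br N' # u"]) (auto simp: replL_def intro!: repl_deepI[where Ga=G1 and Gb=u])
    next
      assume "\<exists>u. L2 = u @ Br N # G2 \<and> G1 = L1 @ u"
      then obtain u where "L2 = u @ Br N # G2" "G1 = L1 @ u" by blast
      then show ?thesis using h
        by (intro disjI2 exI[of _ "u @ Br N' # G2"]) (auto simp: replL_def intro!: repl_deepI[where Ga=u and Gb=G2])
    qed
  qed
qed

lemma replL_Cons_cases: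
  "replL A M d (x # L) L' \<Longrightarrow>
    (\<exists>L1'. L' = L1' @ L \<and> replL A M d [x] L1') \<or> (\<exists>L2'. L' = x # L2' \<and> replL A M d L L2')"
  using replL_append_cases[of A M d "[x]" L L'] by simp

lemma replL_append3_cases:
  assumes "replL A M d (L1 @ Q @ L2) L'"
  obtains (left) L1' where "L' = L1' @ Q @ L2" and "replL A M d L1 L1'"
  | (mid) Q' where "L' = L1 @ Q' @ L2" and "replL A M d Q Q'"
  | (right) L2' where "L' = L1 @ Q @ L2'" and "replL A M d L2 L2'"
proof -
  from replL_append_cases[OF assms] show thesis
  proof (elim disjE exE conjE)
    fix L1' assume "L' = L1' @ Q @ L2" and "replL A M d L1 L1'"
    then show thesis by (rule left)
  next
    fix L2' assume L': "L' = L1 @ L2'" and "replL A M d (Q @ L2) L2'"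
    from replL_append_cases[OF this(2)] show thesis using L' mid right by blast
  qed
qed

lemma repl_Nil: "\<not> repl A M (w, []) N"
  by (auto elim: repl.cases)

lemma replL_Nil: "\<not> replL A M d [] L"
  unfolding replL_def using repl_Nil by blast

lemma replL_single_Fm:
  "replL A M d [Fm B] L \<Longrightarrow> B = A \<and> d = fst M \<and> L = snd M"
proof -
  assume "replL A M d [Fm B] L"
  then have "repl A M ({#}, [Fm B]) (d, L)" unfolding replL_def by (drule_tac x="{#}" in spec) simp
  then show ?thesis
  proof (rule repl.cases)
    fix z G1 G2 assume h: "({#}, [Fm B]) = (z, G1 @ Fm A # G2)" "(d, L) = (fst M + z, G1 @ snd M @ G2)"
    then have "[Fm B] = G1 @ Fm A # G2" by simp
    then have "G1 = [] \<and> G2 = [] \<and> B = A" by (cases G1) auto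
    then show ?thesis using h by auto
  next
    fix N1 N' z G1 G2 assume h: "({#}, [Fm B]) = (z, G1 @ Br N1 # G2)"
    then have "[Fm B] = G1 @ Br N1 # G2" by simp
    then show ?thesis by (cases G1) auto
  qed
qed

lemma replL_single_Br:
  "replL A M d [Br N] L \<Longrightarrow>
    d = {#} \<and> (\<exists>N'. repl A M N N' \<and> L = [Br N'])"
proof -
  assume "replL A M d [Br N] L"
  then have "repl A M ({#}, [Br N]) (d, L)" unfolding replL_def by (drule_tac x="{#}" in spec) simp
  then show ?thesis
  proof (rule repl.cases)
    fix z G1 G2 assume "({#}, [Br N]) = (z, G1 @ Fm A # G2)"
    then have "[Br N] = G1 @ Fm A # G2" by simp
    then show ?thesis by (cases G1) auto
  next
    fix N1 N' z G1 G2 assume h: "({#}, [Br N]) = (z, G1 @ Br N1 # G2)" "(d, L) = (z, G1 @ Br N' # G2)" "repl A M N1 N'"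
    then have "[Br N] = G1 @ Br N1 # G2" by simp
    then have "G1 = [] \<and> G2 = [] \<and> N1 = N" by (cases G1) auto
    then show ?thesis using h by blast
  qed
qed

lemma repl_single_Fm:
  "repl A M (w, [Fm F]) S' \<Longrightarrow> F = A \<and> S' = (fst M + w, snd M)"
  using repl_pair_replL[of A M w "[Fm F]" S'] replL_single_Fm by blast

lemma repl_fill: "repl A M N N' \<Longrightarrow> repl A M (fill X N) (fill X N')"
  by (induction X) (auto intro: repl_deep)

lemma repl_fill_here: "repl A M (fill X (z, G1 @ Fm A # G2)) (fill X (fst M + z, G1 @ snd M @ G2))"
  by (rule repl_fill) (rule repl_here)

lemma repl_axiom: "repl A ({#}, [Fm A]) S S' \<Longrightarrow> S' = S"
  by (induction rule: repl.induct) simp_all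

lemma repl_onefree:
  "repl A M S S' \<Longrightarrow> onefree_meta S \<Longrightarrow> onefree_meta M \<Longrightarrow>
    onefree_meta S'"
  by (induction rule: repl.induct) (auto simp: onefree_meta_pair onefree_t_Br onefree_meta_def[of M])

lemma replL_nonempty:
  "replL A M d L L' \<Longrightarrow> fst M \<noteq> {#} \<or> snd M \<noteq> [] \<Longrightarrow>
    L' \<noteq> [] \<or> d \<noteq> {#}"
  unfolding replL_def by (drule spec[of _ "{#}"]) (auto elim: repl.cases)

lemma repl_fill_cases:
  "repl A M (fill X N) S' \<Longrightarrow>
    (\<exists>N'. repl A M N N' \<and> S' = fill X N') \<or>
    (\<exists>X'. S' = fill X' N \<and> (\<forall>N0. repl A M (fill X N0) (fill X' N0)))"
proof (induction X arbitrary: S')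
  case Hole
  then have "repl A M N S' \<and> S' = fill Hole S'" by simp
  then show ?case by blast
next
  case (CBr z G1 X G2)
  from CBr.prems have "repl A M (z, G1 @ [Br (fill X N)] @ G2) S'" by simp
  from repl_pair_replL[OF this] obtain d L' where S': "S' = (d + z, L')"
    and "replL A M d (G1 @ [Br (fill X N)] @ G2) L'" by blast
  from this(2) show ?case
  proof (cases rule: replL_append3_cases)
    case (left G1')
    have "repl A M (fill (CBr z G1 X G2) N0) (fill (CBr (d + z) G1' X G2) N0)" for N0
      using replL_frame[OF left(2), of "[]" "[Br (fill X N0)] @ G2"] by (simp add: replL_def)
    moreover have "S' = fill (CBr (d + z) G1' X G2) N" using S' left(1) by simp
    ultimately show ?thesis by blast
  next
    case (mid Q')
    then obtain N' where d: "d = {#}" and Q': "Q' = [Br N']" and "repl A M (fill X N) N'"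
      by (blast dest: replL_single_Br)
    from CBr.IH[OF this(3)] show ?thesis
    proof (elim disjE exE conjE)
      fix N'' assume "repl A M N N''" and "N' = fill X N''"
      moreover from this(2) have "S' = fill (CBr z G1 X G2) N''" using S' mid(1) d Q' by simp
      ultimately show ?thesis by blast
    next
      fix X' assume N': "N' = fill X' N" and "\<forall>N0. repl A M (fill X N0) (fill X' N0)"
      then have "\<forall>N0. repl A M (fill (CBr z G1 X G2) N0) (fill (CBr z G1 X' G2) N0)"
        using repl_deep by simp
      moreover have "S' = fill (CBr z G1 X' G2) N" using S' mid(1) d Q' N' by simp
      ultimately show ?thesis by blast
    qed
  next
    case (right G2')
    have "repl A M (fill (CBr z G1 X G2) N0) (fill (CBr (d + z) G1 X G2') N0)" for N0
      using replL_frame[OF right(2), of "G1 @ [Br (fill X N0)]" "[]"] by (simp add: replL_def)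
    moreover have "S' = fill (CBr (d + z) G1 X G2') N" using S' right(1) by simp
    ultimately show ?thesis by blast
  qed
qed

lemma repl_segment_left:
  "replL A M d D1 D1' \<Longrightarrow>
    repl A M (fill X (w, D1 @ Q @ D2)) (fill X (d + w, D1' @ Q @ D2))"
  by (rule repl_fill) (use replL_repl[OF replL_frame[of A M d D1 D1' "[]" "Q @ D2"]] in simp)

lemma repl_segment_right:
  "replL A M d D2 D2' \<Longrightarrow>
    repl A M (fill X (w, D1 @ Q @ D2)) (fill X (d + w, D1 @ Q @ D2'))"
  by (rule repl_fill) (use replL_repl[OF replL_frame[of A M d D2 D2' "D1 @ Q" "[]"]] in simp)

text \<open>A replacement in the conclusion of a rule acting on the segment Q either happens
  in the context, and then equally in every premise, or inside Q.\<close>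

lemma repl_outside_or_inside:
  assumes "repl A M (fill X (s + w, D1 @ Q @ D2)) S'"
  obtains (outside) X' w' D1' D2' where "S' = fill X' (s + w', D1' @ Q @ D2')"
    and "\<And>d Q0. repl A M (fill X (d + w, D1 @ Q0 @ D2)) (fill X' (d + w', D1' @ Q0 @ D2'))"
  | (inside) d Q' where "replL A M d Q Q'" and "S' = fill X (s + (d + w), D1 @ Q' @ D2)"
  using repl_fill_cases[OF assms]
proof (elim disjE exE conjE)
  fix N' assume "repl A M (s + w, D1 @ Q @ D2) N'" and S': "S' = fill X N'"
  from repl_pair_replL[OF this(1)] obtain d L' where N': "N' = (d + (s + w), L')"
    and "replL A M d (D1 @ Q @ D2) L'" by blast
  from this(2) show thesis
  proof (cases rule: replL_append3_cases)
    case (left D1')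
    show thesis
    proof (rule outside[of X "d + w" D1' D2])
      show "S' = fill X (s + (d + w), D1' @ Q @ D2)" using S' N' left(1) by (simp add: ac_simps)
      show "repl A M (fill X (d0 + w, D1 @ Q0 @ D2)) (fill X (d0 + (d + w), D1' @ Q0 @ D2))" for d0 Q0
        using repl_segment_left[OF left(2), of X "d0 + w" Q0 D2] by (simp add: ac_simps)
    qed
  next
    case (mid Q')
    then show thesis using inside S' N' by (simp add: ac_simps)
  next
    case (right D2')
    show thesis
    proof (rule outside[of X "d + w" D1 D2'])
      show "S' = fill X (s + (d + w), D1 @ Q @ D2')" using S' N' right(1) by (simp add: ac_simps)
      show "repl A M (fill X (d0 + w, D1 @ Q0 @ D2)) (fill X (d0 + (d + w), D1 @ Q0 @ D2'))" for d0 Q0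
        using repl_segment_right[OF right(2), of X "d0 + w" D1 Q0] by (simp add: ac_simps)
    qed
  qed
next
  fix X' assume "S' = fill X' (s + w, D1 @ Q @ D2)" and "\<forall>N0. repl A M (fill X N0) (fill X' N0)"
  then show thesis using outside[of X' w D1 D2] by blast
qed

lemma repl_by_fill: "repl A (fill Y M0) S S' \<Longrightarrow> \<exists>Y' z0 H1 H2. S' = fill Y' (fst M0 + z0, H1 @ snd M0 @ H2) \<and>
   (\<forall>M1. repl A (fill Y M1) S (fill Y' (fst M1 + z0, H1 @ snd M1 @ H2)))"
proof (induction rule: repl.induct)
  case (repl_here z G1 G2)
  show ?case
  proof (cases Y)
    case Hole
    have "\<forall>M1. repl A (fill Y M1) (z, G1 @ Fm A # G2) (fill Hole (fst M1 + z, G1 @ snd M1 @ G2))"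
    proof
      fix M1 show "repl A (fill Y M1) (z, G1 @ Fm A # G2) (fill Hole (fst M1 + z, G1 @ snd M1 @ G2))"
        using Hole repl.repl_here[of A "fill Y M1" z G1 G2] by simp
    qed
    moreover have "(fst (fill Y M0) + z, G1 @ snd (fill Y M0) @ G2) = fill Hole (fst M0 + z, G1 @ snd M0 @ G2)"
      using Hole by simp
    ultimately show ?thesis by blast
  next
    case (CBr u L c R)
    let ?Y = "CBr (u + z) (G1 @ L) c (R @ G2)"
    have "\<forall>M1. repl A (fill Y M1) (z, G1 @ Fm A # G2) (fill ?Y (fst M1 + {#}, [] @ snd M1 @ []))"
    proof
      fix M1 show "repl A (fill Y M1) (z, G1 @ Fm A # G2) (fill ?Y (fst M1 + {#}, [] @ snd M1 @ []))"
        using repl.repl_here[of A "fill Y M1" z G1 G2] CBr by (simp add: ac_simps)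
    qed
    moreover have "(fst (fill Y M0) + z, G1 @ snd (fill Y M0) @ G2) = fill ?Y (fst M0 + {#}, [] @ snd M0 @ [])"
      using CBr by (simp add: ac_simps)
    ultimately show ?thesis by blast
  qed
next
  case (repl_deep N N' z G1 G2)
  then obtain Y' z0 H1 H2 where e: "N' = fill Y' (fst M0 + z0, H1 @ snd M0 @ H2)"
    and h: "\<forall>M1. repl A (fill Y M1) N (fill Y' (fst M1 + z0, H1 @ snd M1 @ H2))" by blast
  have "\<forall>M1. repl A (fill Y M1) (z, G1 @ Br N # G2) (fill (CBr z G1 Y' G2) (fst M1 + z0, H1 @ snd M1 @ H2))"
    using h repl.repl_deep by simp
  moreover have "(z, G1 @ Br N' # G2) = fill (CBr z G1 Y' G2) (fst M0 + z0, H1 @ snd M0 @ H2)"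
    using e by simp
  ultimately show ?case by blast
qed

text \<open>Dually, a cut whose left premise ends with a rule acting on the segment Q of
  its antecedent can be performed on the premises instead.\<close>

lemma repl_by_segment:
  assumes "repl A (fill Y (s + w, E1 @ Q @ E2)) S S'"
  obtains Y' w' D1' D2' where "S' = fill Y' (s + w', D1' @ Q @ D2')"
    and "\<And>d Q0. repl A (fill Y (d + w, E1 @ Q0 @ E2)) S (fill Y' (d + w', D1' @ Q0 @ D2'))"
proof -
  from repl_by_fill[OF assms] obtain Y' z0 H1 H2
    where S': "S' = fill Y' ((s + w) + z0, H1 @ (E1 @ Q @ E2) @ H2)"
      and h: "\<forall>M1. repl A (fill Y M1) S (fill Y' (fst M1 + z0, H1 @ snd M1 @ H2))" by auto
  show thesis
  proof (rule that[of Y' "w + z0" "H1 @ E1" "E2 @ H2"])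
    show "S' = fill Y' (s + (w + z0), (H1 @ E1) @ Q @ E2 @ H2)" using S' by (simp add: ac_simps)
    show "repl A (fill Y (d + w, E1 @ Q0 @ E2)) S (fill Y' (d + (w + z0), (H1 @ E1) @ Q0 @ E2 @ H2))" for d Q0
      using h[rule_format, of "(d + w, E1 @ Q0 @ E2)"] by (simp add: ac_simps)
  qed
qed

text \<open>srepl B A' N N' holds if N' arises from N by replacing some occurrences of B
  in the stoups of N, at any depth, by A'.\<close>

definition stoup_repl :: "formula \<Rightarrow> formula \<Rightarrow> stoup \<Rightarrow> stoup \<Rightarrow> bool" where
  "stoup_repl B A' w w' = (\<exists>z0 k. w = z0 + replicate_mset k B \<and> w' = z0 + replicate_mset k A')"

inductive srepl :: "formula \<Rightarrow> formula \<Rightarrow> meta \<Rightarrow> meta \<Rightarrow> bool"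
  and sreplL :: "formula \<Rightarrow> formula \<Rightarrow> tterm list \<Rightarrow> tterm list \<Rightarrow> bool" for B A' where
  srepl_I: "stoup_repl B A' w w' \<Longrightarrow> sreplL B A' L L' \<Longrightarrow> srepl B A' (w, L) (w', L')"
| sreplL_Nil: "sreplL B A' [] []"
| sreplL_Fm: "sreplL B A' L L' \<Longrightarrow> sreplL B A' (Fm F # L) (Fm F # L')"
| sreplL_Br: "srepl B A' N N' \<Longrightarrow> sreplL B A' L L' \<Longrightarrow> sreplL B A' (Br N # L) (Br N' # L')"

lemma sreplL_Nil_iff: "sreplL B A' [] L' = (L' = [])"
  by (auto elim: srepl.cases sreplL.cases intro: sreplL_Nil)

lemma sreplL_Fm_iff:
  "sreplL B A' (Fm F # L) L' = (\<exists>L''. L' = Fm F # L'' \<and> sreplL B A' L L'')"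
  by (auto elim: srepl.cases sreplL.cases intro: sreplL_Fm)

lemma sreplL_Br_iff:
  "sreplL B A' (Br N # L) L' = (\<exists>N' L''. L' = Br N' # L'' \<and> srepl B A' N N' \<and> sreplL B A' L L'')"
  by (auto elim: srepl.cases sreplL.cases intro: sreplL_Br)

lemma srepl_pair_iff:
  "srepl B A' (w, L) S = (\<exists>w' L'. S = (w', L') \<and> stoup_repl B A' w w' \<and> sreplL B A' L L')"
  by (auto elim: srepl.cases sreplL.cases intro: srepl_I)

lemma sreplL_append_iff:
  "sreplL B A' (L1 @ L2) L' = (\<exists>L1' L2'. L' = L1' @ L2' \<and> sreplL B A' L1 L1' \<and> sreplL B A' L2 L2')"
proof (induction L1 arbitrary: L')
  case Nil
  then show ?case by (simp add: sreplL_Nil_iff)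
next
  case (Cons t L1)
  show ?case
  proof (cases t)
    case (Fm F)
    show ?thesis unfolding Fm append_Cons sreplL_Fm_iff Cons.IH
    proof
      assume "\<exists>L''. L' = Fm F # L'' \<and> (\<exists>L1' L2'. L'' = L1' @ L2' \<and> sreplL B A' L1 L1' \<and> sreplL B A' L2 L2')"
      then show "\<exists>L1' L2'. L' = L1' @ L2' \<and> (\<exists>L''. L1' = Fm F # L'' \<and> sreplL B A' L1 L'') \<and> sreplL B A' L2 L2'"
        by (metis append_Cons)
    qed (metis append_Cons)
  next
    case (Br N)
    show ?thesis unfolding Br append_Cons sreplL_Br_iff Cons.IH
    proof
      assume "\<exists>N' L''. L' = Br N' # L'' \<and> srepl B A' N N' \<and> (\<exists>L1' L2'. L'' = L1' @ L2' \<and> sreplL B A' L1 L1' \<and> sreplL B A' L2 L2')"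
      then show "\<exists>L1' L2'. L' = L1' @ L2' \<and> (\<exists>N' L''. L1' = Br N' # L'' \<and> srepl B A' N N' \<and> sreplL B A' L1 L'') \<and> sreplL B A' L2 L2'"
        by (metis append_Cons)
    qed (metis append_Cons)
  qed
qed

lemma sreplL_append:
  "sreplL B A' L1 L1' \<Longrightarrow> sreplL B A' L2 L2' \<Longrightarrow>
    sreplL B A' (L1 @ L2) (L1' @ L2')"
  using sreplL_append_iff by blast

lemma stoup_repl_refl: "stoup_repl B A' w w"
  unfolding stoup_repl_def by (rule exI[of _ w], rule exI[of _ 0]) simp

lemma stoup_repl_add:
  "stoup_repl B A' w1 w1' \<Longrightarrow> stoup_repl B A' w2 w2' \<Longrightarrow>
    stoup_repl B A' (w1 + w2) (w1' + w2')"
proof -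
  assume "stoup_repl B A' w1 w1'" "stoup_repl B A' w2 w2'"
  then obtain z1 k1 z2 k2 where "w1 = z1 + replicate_mset k1 B" "w1' = z1 + replicate_mset k1 A'"
    "w2 = z2 + replicate_mset k2 B" "w2' = z2 + replicate_mset k2 A'" unfolding stoup_repl_def by blast
  then show ?thesis unfolding stoup_repl_def
    by (intro exI[of _ "z1 + z2"] exI[of _ "k1 + k2"]) (simp add: multiset_eq_iff)
qed

lemma stoup_repl_empty: "stoup_repl B A' {#} w' \<Longrightarrow> w' = {#}"
  unfolding stoup_repl_def by auto

lemma stoup_repl_size: "stoup_repl B A' w w' \<Longrightarrow> size w = size w'"
  unfolding stoup_repl_def by auto

lemma stoup_repl_empty_iff: "stoup_repl B A' w w' \<Longrightarrow> (w = {#}) = (w' = {#})"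
  using stoup_repl_size by fastforce

lemma stoup_repl_plus1: "stoup_repl B A' (w + {#A#}) w' \<Longrightarrow>
   (\<exists>w''. w' = w'' + {#A#} \<and> stoup_repl B A' w w'') \<or> (A = B \<and> (\<exists>w''. w' = w'' + {#A'#} \<and> stoup_repl B A' w w''))"
proof -
  assume "stoup_repl B A' (w + {#A#}) w'"
  then obtain z0 k where e1: "w + {#A#} = z0 + replicate_mset k B"
    and e2: "w' = z0 + replicate_mset k A'"
    unfolding stoup_repl_def by blast
  show ?thesis
  proof (cases "A \<in># z0")
    case True
    then obtain z1 where z1: "z0 = z1 + {#A#}" by (metis insert_DiffM2 add_mset_add_single)
    with e1 have "w = z1 + replicate_mset k B" by (simp add: ac_simps)
    then show ?thesis using e2 z1 unfolding stoup_repl_def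
      by (intro disjI1 exI[of _ "z1 + replicate_mset k A'"]) (auto simp: ac_simps)
  next
    case False
    then have "A \<in># replicate_mset k B" using e1
      by (metis add_mset_add_single union_iff union_single_eq_member)
    then have "k > 0 \<and> A = B" by (simp only: in_replicate_mset)
    then have AB: "A = B" and k: "k > 0" by simp_all
    then obtain k' where k': "k = Suc k'" by (cases k) auto
    with e1 AB have "w = z0 + replicate_mset k' B" by (simp add: ac_simps)
    then show ?thesis using e2 AB k' unfolding stoup_repl_def
      by (intro disjI2 conjI exI[of _ "z0 + replicate_mset k' A'"] exI[of _ z0] exI[of _ k']) (auto simp: ac_simps)
  qed
qed

lemma stoup_repl_split:
  "stoup_repl B A' (w1 + w2) w' \<Longrightarrow>
    \<exists>w1' w2'. w' = w1' + w2' \<and> stoup_repl B A' w1 w1' \<and> stoup_repl B A' w2 w2'"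
proof (induction w2 arbitrary: w' rule: multiset_induct)
  case empty
  then show ?case using stoup_repl_refl[of B A' "{#}"] by force
next
  case (add x w2)
  have "stoup_repl B A' ((w1 + w2) + {#x#}) w'" using add.prems by (simp add: ac_simps)
  from stoup_repl_plus1[OF this] obtain w'' y where e: "w' = w'' + {#y#}"
    and s: "stoup_repl B A' (w1 + w2) w''"
    and y: "stoup_repl B A' {#x#} {#y#}"
  proof (elim disjE exE conjE)
    fix w'' assume "w' = w'' + {#x#}" "stoup_repl B A' (w1 + w2) w''"
    then show ?thesis using that stoup_repl_refl by blast
  next
    fix w'' assume "x = B" "w' = w'' + {#A'#}" "stoup_repl B A' (w1 + w2) w''"
    moreover have "stoup_repl B A' {#B#} {#A'#}" unfolding stoup_repl_def
      by (rule exI[of _ "{#}"], rule exI[of _ 1]) simp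
    ultimately show ?thesis using that by blast
  qed
  from add.IH[OF s] obtain w1' w2'
    where "w'' = w1' + w2'" "stoup_repl B A' w1 w1'" "stoup_repl B A' w2 w2'" by blast
  then show ?case using e y stoup_repl_add[of B A' w2 w2' "{#x#}" "{#y#}"]
    by (intro exI[of _ w1'] exI[of _ "w2' + {#y#}"]) (simp add: ac_simps)
qed

lemma stoup_repl_single:
  "stoup_repl B A' {#A#} w' \<Longrightarrow> w' = {#A#} \<or> (A = B \<and> w' = {#A'#})"
  using stoup_repl_plus1[of B A' "{#}" A w'] stoup_repl_empty by force

lemma stoup_repl_singleI: "stoup_repl B A' {#B#} {#A'#}"
  unfolding stoup_repl_def by (rule exI[of _ "{#}"], rule exI[of _ 1]) simp

lemma sreplL_length: "sreplL B A' L L' \<Longrightarrow> length L = length L'"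
proof (induction L arbitrary: L')
  case Nil
  then show ?case by (simp add: sreplL_Nil_iff)
next
  case (Cons t L)
  then show ?case by (cases t) (auto simp: sreplL_Fm_iff sreplL_Br_iff)
qed

lemma sreplL_refl_if:
  "(\<And>t. t \<in> set L \<Longrightarrow> sreplL B A' [t] [t]) \<Longrightarrow> sreplL B A' L L"
proof (induction L)
  case (Cons t L)
  then show ?case using sreplL_append[of B A' "[t]" "[t]" L L] by simp
qed (rule sreplL_Nil)

lemma sreplL_refl: "sreplL B A' L L"
proof -
  have "sreplL B A' [t] [t]" for t
  proof (induction t)
    case (Br N)
    obtain z G where N: "N = (z, G)" by fastforce
    with Br have "sreplL B A' G G" by (fastforce intro: sreplL_refl_if)
    with N show ?case by (auto intro: sreplL_Br sreplL_Nil srepl_I stoup_repl_refl)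
  qed (auto intro: sreplL_Fm sreplL_Nil)
  then show ?thesis by (rule sreplL_refl_if)
qed

lemma srepl_refl: "srepl B A' N N"
  by (cases N) (simp add: srepl_pair_iff stoup_repl_refl sreplL_refl)

lemma srepl_fill_cases: "srepl B A' (fill X N) S' \<Longrightarrow> \<exists>X' N'. S' = fill X' N' \<and> srepl B A' N N' \<and>
   (\<forall>N0 N0'. srepl B A' N0 N0' \<longrightarrow> srepl B A' (fill X N0) (fill X' N0'))"
proof (induction X arbitrary: S')
  case Hole
  then show ?case by (intro exI[of _ Hole] exI[of _ S']) simp
next
  case (CBr z G1 c G2)
  from CBr.prems obtain w' L' where S': "S' = (w', L')" and s: "stoup_repl B A' z w'"
    and l: "sreplL B A' (G1 @ Br (fill c N) # G2) L'" by (auto simp: srepl_pair_iff)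
  from l obtain G1' N1 G2' where L': "L' = G1' @ Br N1 # G2'" and g1: "sreplL B A' G1 G1'"
    and n1: "srepl B A' (fill c N) N1" and g2: "sreplL B A' G2 G2'"
    by (auto simp: sreplL_append_iff sreplL_Br_iff)
  from CBr.IH[OF n1] obtain X' N' where e: "N1 = fill X' N'" and nn: "srepl B A' N N'"
    and h: "\<forall>N0 N0'. srepl B A' N0 N0' \<longrightarrow> srepl B A' (fill c N0) (fill X' N0')"
      by blast
  have "\<forall>N0 N0'. srepl B A' N0 N0' \<longrightarrow> srepl B A' (fill (CBr z G1 c G2) N0) (fill (CBr w' G1' X' G2') N0')"
  proof (intro allI impI)
    fix N0 N0' assume "srepl B A' N0 N0'"
    then have "srepl B A' (fill c N0) (fill X' N0')" using h by blast
    then have "sreplL B A' (G1 @ Br (fill c N0) # G2) (G1' @ Br (fill X' N0') # G2')"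
      using g1 g2 sreplL_append_iff sreplL_Br by blast
    then show "srepl B A' (fill (CBr z G1 c G2) N0) (fill (CBr w' G1' X' G2') N0')"
      using s by (simp add: srepl_I)
  qed
  moreover have "S' = fill (CBr w' G1' X' G2') N'" using S' L' e by simp
  ultimately show ?case using nn by blast
qed

lemma srepl_segment_cases: "srepl B A' (fill X (w, D1 @ Q @ D2)) S' \<Longrightarrow>
   \<exists>X' w' D1' Q' D2'. S' = fill X' (w', D1' @ Q' @ D2') \<and> stoup_repl B A' w w' \<and> sreplL B A' D1 D1' \<and>
     sreplL B A' Q Q' \<and> sreplL B A' D2 D2' \<and> (\<forall>N0 N0'. srepl B A' N0 N0' \<longrightarrow> srepl B A' (fill X N0) (fill X' N0'))"
proof -
  assume "srepl B A' (fill X (w, D1 @ Q @ D2)) S'"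
  from srepl_fill_cases[OF this] obtain X' N' where e: "S' = fill X' N'"
    and n: "srepl B A' (w, D1 @ Q @ D2) N'"
    and h: "\<forall>N0 N0'. srepl B A' N0 N0' \<longrightarrow> srepl B A' (fill X N0) (fill X' N0')"
      by blast
  from n obtain w' L' where "N' = (w', L')" "stoup_repl B A' w w'" "sreplL B A' (D1 @ Q @ D2) L'"
    unfolding srepl_pair_iff by blast
  moreover from this(3) obtain D1' Q' D2'
    where "L' = D1' @ Q' @ D2'" "sreplL B A' D1 D1'" "sreplL B A' Q Q'" "sreplL B A' D2 D2'"
    unfolding sreplL_append_iff by blast
  ultimately show ?thesis using e h by blast
qed

lemma srepl_fill: "srepl B A' N N' \<Longrightarrow> srepl B A' (fill X N) (fill X N')"
  by (induction X) (simp_all add: srepl_I stoup_repl_refl sreplL_append sreplL_refl sreplL_Br)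

lemma srepl_onefree:
  "srepl B A' N N' \<Longrightarrow> onefree A' \<Longrightarrow> onefree_meta N \<Longrightarrow> onefree_meta N'"
  "sreplL B A' L L' \<Longrightarrow> onefree A' \<Longrightarrow> \<forall>t\<in>set L. onefree_t t \<Longrightarrow> \<forall>t\<in>set L'. onefree_t t"
  by (induction rule: srepl_sreplL.inducts)
    (auto simp: stoup_repl_def onefree_meta_pair onefree_t_Br split: if_splits)

section \<open>Cut elimination for M'\<close>

definition cut_admissible :: "bool \<Rightarrow> formula \<Rightarrow> bool" where
  "cut_admissible r A = (\<forall>M S S' C.
     mder r False (M, A) \<longrightarrow> mder r False (S, C) \<longrightarrow> repl A M S S' \<longrightarrow> mder r False (S', C))"

lemma cut_admissibleD:
  "cut_admissible r A \<Longrightarrow> mder r False (M, A) \<Longrightarrow> mder r False (S, C) \<Longrightarrow>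
    repl A M S S' \<Longrightarrow> mder r False (S', C)"
  unfolding cut_admissible_def by blast

lemma srepl_admissible:
  assumes cutB: "cut_admissible r B" and dA: "mder r False (({#A'#}, []), B)"
  shows "mder r False s \<Longrightarrow> srepl B A' (fst s) S' \<Longrightarrow> mder r False (S', snd s)"
proof (induction arbitrary: S' rule: mder.induct)
  case (1 ps s)
  have IH: "\<And>S0 C0 S''. (S0, C0) \<in> set ps \<Longrightarrow> srepl B A' S0 S'' \<Longrightarrow> mder r False (S'', C0)"
    using 1(3) by fastforce
  have ds: "mder r False s" by (rule mder.intros[OF 1(1)]) (use 1(2,3) in auto)
  have wfA: "r \<Longrightarrow> onefree A'" using mder_onefree[OF dA]
    by (simp add: onefree_seq_iff onefree_meta_pair)
  have sr: "srepl B A' (fst s) S'" by fact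
  have wf: "r \<Longrightarrow> onefree_seq (S', snd s)"
  proof -
    assume r
    then have "onefree_meta (fst s) \<and> onefree (snd s)"
      using 1(2) onefree_seq_iff[of "fst s" "snd s"] by simp
    then show "onefree_seq (S', snd s)" using srepl_onefree(1)[OF sr wfA[OF \<open>r\<close>]]
      by (simp add: onefree_seq_iff)
  qed
  from 1(1) show ?case
  proof (cases rule: mrule.cases)
    case (m_ax F)
    then have "S' = ({#}, [Fm F])" using sr stoup_repl_empty
      by (auto simp: srepl_pair_iff sreplL_Fm_iff sreplL_Nil_iff)
    then show ?thesis using ds m_ax by simp
  next
    case m_oneR
    then have "S' = ({#}, [])" using sr stoup_repl_empty by (auto simp: srepl_pair_iff sreplL_Nil_iff)
    then show ?thesis using ds m_oneR by simp
  next
    case (m_overL z1 G B0 X z2 D1 C D2 D)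
    have "srepl B A' (fill X (z1 + z2, D1 @ (Fm (Over C B0) # G) @ D2)) S'" using sr m_overL by simp
    from srepl_segment_cases[OF this] obtain X' w' D1' Q' D2'
      where e: "S' = fill X' (w', D1' @ Q' @ D2')"
      and s: "stoup_repl B A' (z1 + z2) w'" and d1: "sreplL B A' D1 D1'"
        and q: "sreplL B A' (Fm (Over C B0) # G) Q'"
      and d2: "sreplL B A' D2 D2'"
        and h: "\<forall>N0 N0'. srepl B A' N0 N0' \<longrightarrow> srepl B A' (fill X N0) (fill X' N0')"
          by blast
    from q obtain G' where q': "Q' = Fm (Over C B0) # G'" and g: "sreplL B A' G G'"
      by (auto simp: sreplL_Fm_iff)
    from stoup_repl_split[OF s] obtain w1 w2 where w: "w' = w1 + w2" and s1: "stoup_repl B A' z1 w1"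
      and s2: "stoup_repl B A' z2 w2" by blast
    have "srepl B A' (z1, G) (w1, G')" using s1 g by (simp add: srepl_I)
    then have p1: "mder r False ((w1, G'), B0)" by (rule IH[rotated]) (simp add: m_overL)
    have "srepl B A' (fill X (z2, D1 @ Fm C # D2)) (fill X' (w2, D1' @ Fm C # D2'))"
      using h s2 d1 d2 by (simp add: srepl_I sreplL_append sreplL_Fm)
    then have p2: "mder r False (fill X' (w2, D1' @ Fm C # D2'), D)"
      by (rule IH[rotated]) (simp add: m_overL)
    have "mder r False (fill X' (w1 + w2, D1' @ Fm (Over C B0) # G' @ D2'), D)"
      by (rule mder_overL[OF p1 p2]) (use wf e q' w m_overL in simp)
    then show ?thesis using e q' w m_overL by simp
  next
    case (m_overR G z B0 C)
    from sr m_overR obtain w' G' where e: "S' = (w', G')" and s: "stoup_repl B A' z w'"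
      and g: "sreplL B A' G G'"
      by (auto simp: srepl_pair_iff)
    have "srepl B A' (z, G @ [Fm B0]) (w', G' @ [Fm B0])" using s g
      by (simp add: srepl_I sreplL_append sreplL_Fm sreplL_Nil)
    then have p: "mder r False ((w', G' @ [Fm B0]), C)" by (rule IH[rotated]) (simp add: m_overR)
    have c: "r \<longrightarrow> G' \<noteq> [] \<or> w' \<noteq> {#}"
      using m_overR sreplL_length[OF g] stoup_repl_empty_iff[OF s] by auto
    show ?thesis using mder_overR[OF c p] wf e m_overR by simp
  next
    case (m_underL z1 G A0 X z2 D1 C D2 D)
    have "srepl B A' (fill X (z1 + z2, D1 @ (G @ [Fm (Under A0 C)]) @ D2)) S'" using sr m_underL by simp
    from srepl_segment_cases[OF this] obtain X' w' D1' Q' D2'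
      where e: "S' = fill X' (w', D1' @ Q' @ D2')"
      and s: "stoup_repl B A' (z1 + z2) w'" and d1: "sreplL B A' D1 D1'"
        and q: "sreplL B A' (G @ [Fm (Under A0 C)]) Q'"
      and d2: "sreplL B A' D2 D2'"
        and h: "\<forall>N0 N0'. srepl B A' N0 N0' \<longrightarrow> srepl B A' (fill X N0) (fill X' N0')"
          by blast
    from q obtain G' where q': "Q' = G' @ [Fm (Under A0 C)]" and g: "sreplL B A' G G'"
      by (auto simp: sreplL_append_iff sreplL_Fm_iff sreplL_Nil_iff)
    from stoup_repl_split[OF s] obtain w1 w2 where w: "w' = w1 + w2" and s1: "stoup_repl B A' z1 w1"
      and s2: "stoup_repl B A' z2 w2" by blast
    have "srepl B A' (z1, G) (w1, G')" using s1 g by (simp add: srepl_I)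
    then have p1: "mder r False ((w1, G'), A0)" by (rule IH[rotated]) (simp add: m_underL)
    have "srepl B A' (fill X (z2, D1 @ Fm C # D2)) (fill X' (w2, D1' @ Fm C # D2'))"
      using h s2 d1 d2 by (simp add: srepl_I sreplL_append sreplL_Fm)
    then have p2: "mder r False (fill X' (w2, D1' @ Fm C # D2'), D)"
      by (rule IH[rotated]) (simp add: m_underL)
    have "mder r False (fill X' (w1 + w2, D1' @ G' @ Fm (Under A0 C) # D2'), D)"
      by (rule mder_underL[OF p1 p2]) (use wf e q' w m_underL in simp)
    then show ?thesis using e q' w m_underL by simp
  next
    case (m_underR G z A0 C)
    from sr m_underR obtain w' G' where e: "S' = (w', G')" and s: "stoup_repl B A' z w'"
      and g: "sreplL B A' G G'"
      by (auto simp: srepl_pair_iff)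
    have "srepl B A' (z, Fm A0 # G) (w', Fm A0 # G')" using s g by (simp add: srepl_I sreplL_Fm)
    then have p: "mder r False ((w', Fm A0 # G'), C)" by (rule IH[rotated]) (simp add: m_underR)
    have c: "r \<longrightarrow> G' \<noteq> [] \<or> w' \<noteq> {#}"
      using m_underR sreplL_length[OF g] stoup_repl_empty_iff[OF s] by auto
    show ?thesis using mder_underR[OF c p] wf e m_underR by simp
  next
    case (m_prodL X z D1 A0 B0 D2 D)
    have "srepl B A' (fill X (z, D1 @ [Fm (Prod A0 B0)] @ D2)) S'" using sr m_prodL by simp
    from srepl_segment_cases[OF this] obtain X' w' D1' Q' D2'
      where e: "S' = fill X' (w', D1' @ Q' @ D2')"
      and s: "stoup_repl B A' z w'" and d1: "sreplL B A' D1 D1'"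
        and q: "sreplL B A' [Fm (Prod A0 B0)] Q'"
      and d2: "sreplL B A' D2 D2'"
        and h: "\<forall>N0 N0'. srepl B A' N0 N0' \<longrightarrow> srepl B A' (fill X N0) (fill X' N0')"
          by blast
    from q have q': "Q' = [Fm (Prod A0 B0)]" by (auto simp: sreplL_Fm_iff sreplL_Nil_iff)
    have "srepl B A' (fill X (z, D1 @ Fm A0 # Fm B0 # D2)) (fill X' (w', D1' @ Fm A0 # Fm B0 # D2'))"
      using h s d1 d2 by (simp add: srepl_I sreplL_append sreplL_Fm)
    then have p: "mder r False (fill X' (w', D1' @ Fm A0 # Fm B0 # D2'), D)"
      by (rule IH[rotated]) (simp add: m_prodL)
    show ?thesis using mder_prodL[OF p] wf e q' m_prodL by simp
  next
    case (m_prodR z1 D A0 z2 G B0)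
    from sr m_prodR obtain w' L' where e: "S' = (w', L')" and s: "stoup_repl B A' (z1 + z2) w'"
      and l: "sreplL B A' (D @ G) L'"
      by (auto simp: srepl_pair_iff)
    from l obtain D' G' where l': "L' = D' @ G'" and d: "sreplL B A' D D'" and g: "sreplL B A' G G'"
      by (auto simp: sreplL_append_iff)
    from stoup_repl_split[OF s] obtain w1 w2 where w: "w' = w1 + w2" and s1: "stoup_repl B A' z1 w1"
      and s2: "stoup_repl B A' z2 w2" by blast
    have "srepl B A' (z1, D) (w1, D')" using s1 d by (simp add: srepl_I)
    then have p1: "mder r False ((w1, D'), A0)" by (rule IH[rotated]) (simp add: m_prodR)
    have "srepl B A' (z2, G) (w2, G')" using s2 g by (simp add: srepl_I)
    then have p2: "mder r False ((w2, G'), B0)" by (rule IH[rotated]) (simp add: m_prodR)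
    show ?thesis using mder_prodR[OF p1 p2] wf e l' w m_prodR by simp
  next
    case (m_oneL X z D1 D2 A0)
    have "srepl B A' (fill X (z, D1 @ [Fm One] @ D2)) S'" using sr m_oneL by simp
    from srepl_segment_cases[OF this] obtain X' w' D1' Q' D2'
      where e: "S' = fill X' (w', D1' @ Q' @ D2')"
      and s: "stoup_repl B A' z w'" and d1: "sreplL B A' D1 D1'" and q: "sreplL B A' [Fm One] Q'"
      and d2: "sreplL B A' D2 D2'"
        and h: "\<forall>N0 N0'. srepl B A' N0 N0' \<longrightarrow> srepl B A' (fill X N0) (fill X' N0')"
          by blast
    from q have q': "Q' = [Fm One]" by (auto simp: sreplL_Fm_iff sreplL_Nil_iff)
    have "srepl B A' (fill X (z, D1 @ D2)) (fill X' (w', D1' @ D2'))"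
      using h s d1 d2 by (simp add: srepl_I sreplL_append)
    then have p: "mder r False (fill X' (w', D1' @ D2'), A0)" by (rule IH[rotated]) (simp add: m_oneL)
    show ?thesis using mder_oneL[OF _ p] e q' m_oneL by simp
  next
    case (m_orL X z D1 A1 D2 C A2)
    have "srepl B A' (fill X (z, D1 @ [Fm (Or A1 A2)] @ D2)) S'" using sr m_orL by simp
    from srepl_segment_cases[OF this] obtain X' w' D1' Q' D2'
      where e: "S' = fill X' (w', D1' @ Q' @ D2')"
      and s: "stoup_repl B A' z w'" and d1: "sreplL B A' D1 D1'" and q: "sreplL B A' [Fm (Or A1 A2)] Q'"
      and d2: "sreplL B A' D2 D2'"
        and h: "\<forall>N0 N0'. srepl B A' N0 N0' \<longrightarrow> srepl B A' (fill X N0) (fill X' N0')"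
          by blast
    from q have q': "Q' = [Fm (Or A1 A2)]" by (auto simp: sreplL_Fm_iff sreplL_Nil_iff)
    have "srepl B A' (fill X (z, D1 @ Fm A1 # D2)) (fill X' (w', D1' @ Fm A1 # D2'))"
      using h s d1 d2 by (simp add: srepl_I sreplL_append sreplL_Fm)
    then have p1: "mder r False (fill X' (w', D1' @ Fm A1 # D2'), C)"
      by (rule IH[rotated]) (simp add: m_orL)
    have "srepl B A' (fill X (z, D1 @ Fm A2 # D2)) (fill X' (w', D1' @ Fm A2 # D2'))"
      using h s d1 d2 by (simp add: srepl_I sreplL_append sreplL_Fm)
    then have p2: "mder r False (fill X' (w', D1' @ Fm A2 # D2'), C)"
      by (rule IH[rotated]) (simp add: m_orL)
    show ?thesis using mder_orL[OF p1 p2] wf e q' m_orL by simp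
  next
    case (m_orR1 Y A1 A2)
    have p: "mder r False (S', A1)" using IH[OF _ sr] m_orR1 by simp
    show ?thesis using mder_orR1[OF p] wf m_orR1 by simp
  next
    case (m_orR2 Y A2 A1)
    have p: "mder r False (S', A2)" using IH[OF _ sr] m_orR2 by simp
    show ?thesis using mder_orR2[OF p] wf m_orR2 by simp
  next
    case (m_andL1 X z D1 A1 D2 C A2)
    have "srepl B A' (fill X (z, D1 @ [Fm (And A1 A2)] @ D2)) S'" using sr m_andL1 by simp
    from srepl_segment_cases[OF this] obtain X' w' D1' Q' D2'
      where e: "S' = fill X' (w', D1' @ Q' @ D2')"
      and s: "stoup_repl B A' z w'" and d1: "sreplL B A' D1 D1'" and q: "sreplL B A' [Fm (And A1 A2)] Q'"
      and d2: "sreplL B A' D2 D2'"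
        and h: "\<forall>N0 N0'. srepl B A' N0 N0' \<longrightarrow> srepl B A' (fill X N0) (fill X' N0')"
          by blast
    from q have q': "Q' = [Fm (And A1 A2)]" by (auto simp: sreplL_Fm_iff sreplL_Nil_iff)
    have "srepl B A' (fill X (z, D1 @ Fm A1 # D2)) (fill X' (w', D1' @ Fm A1 # D2'))"
      using h s d1 d2 by (simp add: srepl_I sreplL_append sreplL_Fm)
    then have p: "mder r False (fill X' (w', D1' @ Fm A1 # D2'), C)"
      by (rule IH[rotated]) (simp add: m_andL1)
    show ?thesis using mder_andL1[OF p] wf e q' m_andL1 by simp
  next
    case (m_andL2 X z D1 A2 D2 C A1)
    have "srepl B A' (fill X (z, D1 @ [Fm (And A1 A2)] @ D2)) S'" using sr m_andL2 by simp
    from srepl_segment_cases[OF this] obtain X' w' D1' Q' D2'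
      where e: "S' = fill X' (w', D1' @ Q' @ D2')"
      and s: "stoup_repl B A' z w'" and d1: "sreplL B A' D1 D1'" and q: "sreplL B A' [Fm (And A1 A2)] Q'"
      and d2: "sreplL B A' D2 D2'"
        and h: "\<forall>N0 N0'. srepl B A' N0 N0' \<longrightarrow> srepl B A' (fill X N0) (fill X' N0')"
          by blast
    from q have q': "Q' = [Fm (And A1 A2)]" by (auto simp: sreplL_Fm_iff sreplL_Nil_iff)
    have "srepl B A' (fill X (z, D1 @ Fm A2 # D2)) (fill X' (w', D1' @ Fm A2 # D2'))"
      using h s d1 d2 by (simp add: srepl_I sreplL_append sreplL_Fm)
    then have p: "mder r False (fill X' (w', D1' @ Fm A2 # D2'), C)"
      by (rule IH[rotated]) (simp add: m_andL2)
    show ?thesis using mder_andL2[OF p] wf e q' m_andL2 by simp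
  next
    case (m_andR Y A1 A2)
    have p1: "mder r False (S', A1)" using IH[OF _ sr] m_andR by simp
    have p2: "mder r False (S', A2)" using IH[OF _ sr] m_andR by simp
    show ?thesis using mder_andR[OF p1 p2] wf m_andR by simp
  next
    case (m_boxL X z D1 A0 D2 B1)
    have "srepl B A' (fill X (z, D1 @ [Br ({#}, [Fm (Box A0)])] @ D2)) S'" using sr m_boxL by simp
    from srepl_segment_cases[OF this] obtain X' w' D1' Q' D2'
      where e: "S' = fill X' (w', D1' @ Q' @ D2')"
      and s: "stoup_repl B A' z w'" and d1: "sreplL B A' D1 D1'"
        and q: "sreplL B A' [Br ({#}, [Fm (Box A0)])] Q'"
      and d2: "sreplL B A' D2 D2'"
        and h: "\<forall>N0 N0'. srepl B A' N0 N0' \<longrightarrow> srepl B A' (fill X N0) (fill X' N0')"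
          by blast
    from q stoup_repl_empty have q': "Q' = [Br ({#}, [Fm (Box A0)])]"
      by (auto simp: sreplL_Fm_iff sreplL_Br_iff sreplL_Nil_iff srepl_pair_iff)
    have "srepl B A' (fill X (z, D1 @ Fm A0 # D2)) (fill X' (w', D1' @ Fm A0 # D2'))"
      using h s d1 d2 by (simp add: srepl_I sreplL_append sreplL_Fm)
    then have p: "mder r False (fill X' (w', D1' @ Fm A0 # D2'), B1)"
      by (rule IH[rotated]) (simp add: m_boxL)
    show ?thesis using mder_boxL[OF p] wf e q' m_boxL by simp
  next
    case (m_boxR Y A0)
    have "srepl B A' ({#}, [Br Y]) ({#}, [Br S'])" using sr m_boxR
      by (simp add: srepl_I stoup_repl_refl sreplL_Br sreplL_Nil)
    then have p: "mder r False (({#}, [Br S']), A0)" by (rule IH[rotated]) (simp add: m_boxR)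
    show ?thesis using mder_boxR[OF p] wf m_boxR by simp
  next
    case (m_diaL X z D1 A0 D2 B1)
    have "srepl B A' (fill X (z, D1 @ [Fm (Dia A0)] @ D2)) S'" using sr m_diaL by simp
    from srepl_segment_cases[OF this] obtain X' w' D1' Q' D2'
      where e: "S' = fill X' (w', D1' @ Q' @ D2')"
      and s: "stoup_repl B A' z w'" and d1: "sreplL B A' D1 D1'" and q: "sreplL B A' [Fm (Dia A0)] Q'"
      and d2: "sreplL B A' D2 D2'"
        and h: "\<forall>N0 N0'. srepl B A' N0 N0' \<longrightarrow> srepl B A' (fill X N0) (fill X' N0')"
          by blast
    from q have q': "Q' = [Fm (Dia A0)]" by (auto simp: sreplL_Fm_iff sreplL_Nil_iff)
    have "srepl B A' (fill X (z, D1 @ Br ({#}, [Fm A0]) # D2)) (fill X' (w', D1' @ Br ({#}, [Fm A0]) # D2'))"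
      using h s d1 d2 by (simp add: srepl_I sreplL_append sreplL_Br srepl_refl)
    then have p: "mder r False (fill X' (w', D1' @ Br ({#}, [Fm A0]) # D2'), B1)"
      by (rule IH[rotated]) (simp add: m_diaL)
    show ?thesis using mder_diaL[OF p] wf e q' m_diaL by simp
  next
    case (m_diaR Y A0)
    from sr m_diaR stoup_repl_empty obtain Y' where e: "S' = ({#}, [Br Y'])" and y: "srepl B A' Y Y'"
      by (auto simp: srepl_pair_iff sreplL_Br_iff sreplL_Nil_iff)
    have p: "mder r False (Y', A0)" using IH[OF _ y] m_diaR by simp
    show ?thesis using mder_diaR[OF p] wf e m_diaR by simp
  next
    case (m_bangL X z A0 G1 G2 B1)
    have "srepl B A' (fill X (z, G1 @ [Fm (Bang A0)] @ G2)) S'" using sr m_bangL by simp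
    from srepl_segment_cases[OF this] obtain X' w' D1' Q' D2'
      where e: "S' = fill X' (w', D1' @ Q' @ D2')"
      and s: "stoup_repl B A' z w'" and d1: "sreplL B A' G1 D1'" and q: "sreplL B A' [Fm (Bang A0)] Q'"
      and d2: "sreplL B A' G2 D2'"
        and h: "\<forall>N0 N0'. srepl B A' N0 N0' \<longrightarrow> srepl B A' (fill X N0) (fill X' N0')"
          by blast
    from q have q': "Q' = [Fm (Bang A0)]" by (auto simp: sreplL_Fm_iff sreplL_Nil_iff)
    have "stoup_repl B A' (z + {#A0#}) (w' + {#A0#})" using s stoup_repl_add stoup_repl_refl by blast
    then have "srepl B A' (fill X (z + {#A0#}, G1 @ G2)) (fill X' (w' + {#A0#}, D1' @ D2'))"
      using h d1 d2 by (simp add: srepl_I sreplL_append)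
    then have p: "mder r False (fill X' (w' + {#A0#}, D1' @ D2'), B1)"
      by (rule IH[rotated]) (simp add: m_bangL)
    show ?thesis using mder_bangL[OF p] wf e q' m_bangL by simp
  next
    case (m_bangP X z G1 A0 G2 B1)
    have "srepl B A' (fill X (z + {#A0#}, G1 @ [] @ G2)) S'" using sr m_bangP by simp
    from srepl_segment_cases[OF this] obtain X' w' D1' Q' D2'
      where e: "S' = fill X' (w', D1' @ Q' @ D2')"
      and s: "stoup_repl B A' (z + {#A0#}) w'" and d1: "sreplL B A' G1 D1'" and q: "sreplL B A' [] Q'"
      and d2: "sreplL B A' G2 D2'"
        and h: "\<forall>N0 N0'. srepl B A' N0 N0' \<longrightarrow> srepl B A' (fill X N0) (fill X' N0')"
          by blast
    from q have q': "Q' = []" by (simp add: sreplL_Nil_iff)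
    from stoup_repl_plus1[OF s] show ?thesis
    proof (elim disjE exE conjE)
      fix w'' assume w: "w' = w'' + {#A0#}" and s': "stoup_repl B A' z w''"
      have "srepl B A' (fill X (z, G1 @ Fm A0 # G2)) (fill X' (w'', D1' @ Fm A0 # D2'))"
        using h s' d1 d2 by (simp add: srepl_I sreplL_append sreplL_Fm)
      then have p: "mder r False (fill X' (w'', D1' @ Fm A0 # D2'), B1)"
        by (rule IH[rotated]) (simp add: m_bangP)
      show ?thesis using mder_bangP[OF p] wf e q' w m_bangP by simp
    next
      fix w'' assume ab: "A0 = B" and w: "w' = w'' + {#A'#}" and s': "stoup_repl B A' z w''"
      have "srepl B A' (fill X (z, G1 @ Fm A0 # G2)) (fill X' (w'', D1' @ Fm A0 # D2'))"
        using h s' d1 d2 by (simp add: srepl_I sreplL_append sreplL_Fm)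
      then have "mder r False (fill X' (w'', D1' @ Fm A0 # D2'), B1)"
        by (rule IH[rotated]) (simp add: m_bangP)
      then have p: "mder r False (fill X' (w'', D1' @ Fm B # D2'), B1)" using ab by simp
      have "repl B ({#A'#}, []) (fill X' (w'', D1' @ Fm B # D2')) (fill X' (fst ({#A'#}, []::tterm list) + w'', D1' @ snd ({#A'#}, []::tterm list) @ D2'))"
        by (rule repl_fill_here)
      then have "mder r False (fill X' ({#A'#} + w'', D1' @ D2'), B1)"
        using cut_admissibleD[OF cutB dA p] by simp
      then show ?thesis using e q' w m_bangP by (simp add: ac_simps)
    qed
  next
    case (m_bangR A0 B1)
    from sr m_bangR obtain w' where e: "S' = (w', [])" and s: "stoup_repl B A' {#A0#} w'"
      by (auto simp: srepl_pair_iff sreplL_Nil_iff)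
    from stoup_repl_single[OF s] show ?thesis
    proof
      assume "w' = {#A0#}"
      then show ?thesis using ds e m_bangR by simp
    next
      assume a: "A0 = B \<and> w' = {#A'#}"
      have "srepl B A' ({#A0#}, []) ({#A'#}, [])" using a stoup_repl_singleI
        by (simp add: srepl_I sreplL_Nil)
      then have p: "mder r False (({#A'#}, []), B1)" by (rule IH[rotated]) (simp add: m_bangR)
      show ?thesis using mder_bangR[OF p] wf e a m_bangR by simp
    qed
  next
    case (m_bangC G2 z' X z A0 G1 G3 B1)
    have "srepl B A' (fill X (z + {#A0#}, G1 @ [Br ({#}, [Br (z', G2)])] @ G3)) S'" using sr m_bangC
      by simp
    from srepl_segment_cases[OF this] obtain X' w' D1' Q' D2'
      where e: "S' = fill X' (w', D1' @ Q' @ D2')"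
      and s: "stoup_repl B A' (z + {#A0#}) w'" and d1: "sreplL B A' G1 D1'"
        and q: "sreplL B A' [Br ({#}, [Br (z', G2)])] Q'"
      and d2: "sreplL B A' G3 D2'"
        and h: "\<forall>N0 N0'. srepl B A' N0 N0' \<longrightarrow> srepl B A' (fill X N0) (fill X' N0')"
          by blast
    from q stoup_repl_empty obtain z'' G2' where q': "Q' = [Br ({#}, [Br (z'', G2')])]"
      and sz: "stoup_repl B A' z' z''"
      and g2: "sreplL B A' G2 G2'"
      by (auto simp: sreplL_Br_iff sreplL_Nil_iff srepl_pair_iff)
    have c: "r \<longrightarrow> G2' \<noteq> [] \<or> z'' \<noteq> {#}"
      using m_bangC sreplL_length[OF g2] stoup_repl_empty_iff[OF sz] by auto
    from stoup_repl_plus1[OF s] show ?thesis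
    proof (elim disjE exE conjE)
      fix w'' assume w: "w' = w'' + {#A0#}" and s': "stoup_repl B A' z w''"
      have "stoup_repl B A' (z + {#A0#}) (w'' + {#A0#})" "stoup_repl B A' (z' + {#A0#}) (z'' + {#A0#})"
        using s' sz stoup_repl_add stoup_repl_refl by blast+
      then have "srepl B A' (fill X (z + {#A0#}, G1 @ Br (z' + {#A0#}, G2) # G3)) (fill X' (w'' + {#A0#}, D1' @ Br (z'' + {#A0#}, G2') # D2'))"
        using h d1 d2 g2 by (simp add: srepl_I sreplL_append sreplL_Br)
      then have p: "mder r False (fill X' (w'' + {#A0#}, D1' @ Br (z'' + {#A0#}, G2') # D2'), B1)"
        by (rule IH[rotated]) (simp add: m_bangC)
      show ?thesis using mder_bangC[OF c p] wf e q' w m_bangC by simp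
    next
      fix w'' assume ab: "A0 = B" and w: "w' = w'' + {#A'#}" and s': "stoup_repl B A' z w''"
      have "stoup_repl B A' (z + {#A0#}) (w'' + {#A'#})" "stoup_repl B A' (z' + {#A0#}) (z'' + {#A'#})"
        using s' sz stoup_repl_add stoup_repl_singleI ab by blast+
      then have "srepl B A' (fill X (z + {#A0#}, G1 @ Br (z' + {#A0#}, G2) # G3)) (fill X' (w'' + {#A'#}, D1' @ Br (z'' + {#A'#}, G2') # D2'))"
        using h d1 d2 g2 by (simp add: srepl_I sreplL_append sreplL_Br)
      then have p: "mder r False (fill X' (w'' + {#A'#}, D1' @ Br (z'' + {#A'#}, G2') # D2'), B1)"
        by (rule IH[rotated]) (simp add: m_bangC)
      show ?thesis using mder_bangC[OF c p] wf e q' w m_bangC by simp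
    qed
  next
    case m_cut
    then show ?thesis by simp
  qed
qed

text \<open>principal_prems r A M: the sequent M \<rightarrow> A is the conclusion of a right rule for
  the main connective of A whose premises are derivable without cut.\<close>

fun principal_prems :: "bool \<Rightarrow> formula \<Rightarrow> meta \<Rightarrow> bool" where
  "principal_prems r (Var n) M = False"
| "principal_prems r One M = (M = ({#}, []))"
| "principal_prems r (Under A C) M = mder r False ((fst M, Fm A # snd M), C)"
| "principal_prems r (Over C B) M = mder r False ((fst M, snd M @ [Fm B]), C)"
| "principal_prems r (Prod A B) M =
     (\<exists>z1 D z2 G. M = (z1 + z2, D @ G) \<and> mder r False ((z1, D), A) \<and> mder r False ((z2, G), B))"
| "principal_prems r (And A B) M = (mder r False (M, A) \<and> mder r False (M, B))"
| "principal_prems r (Or A B) M = (mder r False (M, A) \<or> mder r False (M, B))"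
| "principal_prems r (Dia A) M = (\<exists>Y. M = ({#}, [Br Y]) \<and> mder r False (Y, A))"
| "principal_prems r (Box A) M = mder r False (({#}, [Br M]), A)"
| "principal_prems r (Bang B) M = (\<exists>A'. M = ({#A'#}, []) \<and> mder r False (({#A'#}, []), B))"

lemma cut_reduce_Over:
  assumes "cut_admissible r B" and "cut_admissible r C"
    and "mder r False ((fst M, snd M @ [Fm B]), C)"
    and "mder r False ((z1, G), B)" and "mder r False (fill X (z2, D1 @ Fm C # D2), D)"
  shows "mder r False (fill X (fst M + z1 + z2, D1 @ snd M @ G @ D2), D)"
proof -
  have "repl B (z1, G) (fst M, snd M @ [Fm B]) (z1 + fst M, snd M @ G)"
    using repl_here[of B "(z1, G)" "fst M" "snd M" "[]"] by simp
  from cut_admissibleD[OF assms(1,4,3) this] have "mder r False ((z1 + fst M, snd M @ G), C)" .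
  from cut_admissibleD[OF assms(2) this assms(5) repl_fill_here] show ?thesis
    by (simp add: ac_simps)
qed

lemma cut_reduce_Under:
  assumes "cut_admissible r A" and "cut_admissible r C"
    and "mder r False ((fst M, Fm A # snd M), C)"
    and "mder r False ((z1, G), A)" and "mder r False (fill X (z2, D1 @ Fm C # D2), D)"
  shows "mder r False (fill X (fst M + z1 + z2, D1 @ G @ snd M @ D2), D)"
proof -
  have "repl A (z1, G) (fst M, Fm A # snd M) (z1 + fst M, G @ snd M)"
    using repl_here[of A "(z1, G)" "fst M" "[]" "snd M"] by simp
  from cut_admissibleD[OF assms(1,4,3) this] have "mder r False ((z1 + fst M, G @ snd M), C)" .
  from cut_admissibleD[OF assms(2) this assms(5) repl_fill_here] show ?thesis
    by (simp add: ac_simps)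
qed

lemma cut_reduce_Prod:
  assumes "cut_admissible r A" and "cut_admissible r B"
    and "mder r False ((z1, L1), A)" and "mder r False ((z2, L2), B)"
    and "mder r False (fill X (z, D1 @ Fm A # Fm B # D2), D)"
  shows "mder r False (fill X (z1 + z2 + z, D1 @ L1 @ L2 @ D2), D)"
proof -
  have "repl B (z2, L2) (fill X (z, D1 @ Fm A # Fm B # D2)) (fill X (z2 + z, D1 @ Fm A # L2 @ D2))"
    using repl_fill_here[of B "(z2, L2)" X z "D1 @ [Fm A]" D2] by simp
  from cut_admissibleD[OF assms(2,4,5) this]
  have "mder r False (fill X (z2 + z, D1 @ Fm A # L2 @ D2), D)" .
  from cut_admissibleD[OF assms(1,3) this repl_fill_here] show ?thesis
    by (simp add: ac_simps)
qed

lemma cut_reduce_Dia: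
  assumes "cut_admissible r A" and "mder r False (Y, A)"
    and "mder r False (fill X (z, D1 @ Br ({#}, [Fm A]) # D2), D)"
  shows "mder r False (fill X (z, D1 @ Br Y # D2), D)"
proof -
  have "repl A Y (fill X (z, D1 @ Br ({#}, [Fm A]) # D2)) (fill X (z, D1 @ Br Y # D2))"
    using repl_fill_here[of A Y "ctx_comp X (CBr z D1 Hole D2)" "{#}" "[]" "[]"]
      by (simp add: fill_ctx_comp)
  from cut_admissibleD[OF assms this] show ?thesis .
qed

lemma cut_reduce_Bang:
  assumes "cut_admissible r B" and "mder r False (({#A'#}, []), B)"
    and "mder r False (fill X (z + {#B#}, G1 @ G2), D)"
  shows "mder r False (fill X (z + {#A'#}, G1 @ G2), D)"
proof -
  have "stoup_repl B A' (z + {#B#}) (z + {#A'#})"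
    by (rule stoup_repl_add[OF stoup_repl_refl stoup_repl_singleI])
  then have "srepl B A' (z + {#B#}, G1 @ G2) (z + {#A'#}, G1 @ G2)"
    by (rule srepl_I[OF _ sreplL_refl])
  then have "srepl B A' (fill X (z + {#B#}, G1 @ G2)) (fill X (z + {#A'#}, G1 @ G2))"
    by (rule srepl_fill)
  with srepl_admissible[OF assms(1,2,3)] show ?thesis by simp
qed

text \<open>A cut whose left premise M \<rightarrow> A ends with a right rule for A is permuted upwards
  in the derivation of the right premise until A becomes principal there as well.\<close>

lemma cut_principal_left:
  assumes dM: "mder r False (M, A)" and prin: "principal_prems r A M"
    and sub: "\<And>F. size F < size A \<Longrightarrow> cut_admissible r F"
  shows "mder r False s \<Longrightarrow> repl A M (fst s) S' \<Longrightarrow> mder r False (S', snd s)"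
proof (induction arbitrary: S' rule: mder.induct)
  case (1 ps s)
  have IH: "\<And>S0 C0 S''. repl A M S0 S'' \<Longrightarrow> (S0, C0) \<in> set ps \<Longrightarrow> mder r False (S'', C0)"
    using 1(3) by fastforce
  have prem: "\<And>p. p \<in> set ps \<Longrightarrow> mder r False p" using 1(3) by blast
  have rp: "repl A M (fst s) S'" by fact
  have wf: "r \<Longrightarrow> onefree_seq (S', snd s)"
  proof -
    assume r
    with 1(2) have "onefree_meta (fst s)" "onefree (snd s)"
      using onefree_seq_iff[of "fst s" "snd s"] by simp_all
    moreover have "onefree_meta M" using mder_onefree[OF dM \<open>r\<close>]
      by (simp add: onefree_seq_iff)
    ultimately show ?thesis using repl_onefree[OF rp] by (simp add: onefree_seq_iff)
  qed
  have neM: "r \<longrightarrow> fst M \<noteq> {#} \<or> snd M \<noteq> []"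
    using mder_restricted_antecedent[OF dM] by blast
  from 1(1) show ?case
  proof (cases rule: mrule.cases)
    case (m_ax F)
    with rp repl_single_Fm[of A M "{#}" F S'] show ?thesis using dM by auto
  next
    case m_oneR
    with rp show ?thesis by (simp add: repl_Nil)
  next
    case (m_overL z1 G B X z2 D1 C D2 D)
    have p1: "mder r False ((z1, G), B)" and p2: "mder r False (fill X (z2, D1 @ Fm C # D2), D)"
      using prem m_overL by simp_all
    from rp m_overL have "repl A M (fill X (z1 + z2, D1 @ (Fm (Over C B) # G) @ D2)) S'" by simp
    then show ?thesis
    proof (cases rule: repl_outside_or_inside)
      case (outside X' w' D1' D2')
      from outside(2) have "mder r False (fill X' ({#} + w', D1' @ [Fm C] @ D2'), D)"
        by (rule IH) (simp add: m_overL)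
      then show ?thesis using mder_overL[OF p1, of X' w' D1' C D2' D] outside(1) wf m_overL by simp
    next
      case (inside d Q')
      from replL_Cons_cases[OF inside(1)] show ?thesis
      proof (elim disjE exE conjE)
        fix L1' assume Q': "Q' = L1' @ G" and "replL A M d [Fm (Over C B)] L1'"
        then have a: "A = Over C B" "d = fst M" "L1' = snd M" by (auto dest: replL_single_Fm)
        with sub have "cut_admissible r B" "cut_admissible r C" by simp_all
        from cut_reduce_Over[OF this _ p1 p2] prin a(1)
        have "mder r False (fill X (fst M + z1 + z2, D1 @ snd M @ G @ D2), D)" by simp
        then show ?thesis using Q' a inside(2) m_overL by (simp add: ac_simps)
      next
        fix L2' assume "Q' = Fm (Over C B) # L2'" and "replL A M d G L2'"
        from replL_repl[OF this(2)] have "mder r False ((d + z1, L2'), B)"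
          by (rule IH) (simp add: m_overL)
        from mder_overL[OF this p2] show ?thesis
          using \<open>Q' = Fm (Over C B) # L2'\<close> inside(2) wf m_overL by (simp add: ac_simps)
      qed
    qed
  next
    case (m_overR G z B C)
    from rp m_overR obtain d G' where S': "S' = (d + z, G')" and q: "replL A M d G G'"
      using repl_pair_replL by fastforce
    have "repl A M (z, G @ [Fm B]) (d + z, G' @ [Fm B])"
      using replL_repl[OF replL_frame[OF q, of "[]" "[Fm B]"]] by simp
    then have "mder r False ((d + z, G' @ [Fm B]), C)" by (rule IH) (simp add: m_overR)
    moreover have "r \<longrightarrow> G' \<noteq> [] \<or> d + z \<noteq> {#}"
      using replL_nonempty[OF q] neM by auto
    ultimately show ?thesis using mder_overR wf S' m_overR by simp
  next
    case (m_underL z1 G A0 X z2 D1 C D2 D)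
    have p1: "mder r False ((z1, G), A0)" and p2: "mder r False (fill X (z2, D1 @ Fm C # D2), D)"
      using prem m_underL by simp_all
    from rp m_underL have "repl A M (fill X (z1 + z2, D1 @ (G @ [Fm (Under A0 C)]) @ D2)) S'" by simp
    then show ?thesis
    proof (cases rule: repl_outside_or_inside)
      case (outside X' w' D1' D2')
      from outside(2) have "mder r False (fill X' ({#} + w', D1' @ [Fm C] @ D2'), D)"
        by (rule IH) (simp add: m_underL)
      then show ?thesis using mder_underL[OF p1, of X' w' D1' C D2' D] outside(1) wf m_underL by simp
    next
      case (inside d Q')
      from replL_append_cases[OF inside(1)] show ?thesis
      proof (elim disjE exE conjE)
        fix L1' assume "Q' = L1' @ [Fm (Under A0 C)]" and "replL A M d G L1'"
        from replL_repl[OF this(2)] have "mder r False ((d + z1, L1'), A0)"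
          by (rule IH) (simp add: m_underL)
        from mder_underL[OF this p2] show ?thesis
          using \<open>Q' = L1' @ [Fm (Under A0 C)]\<close> inside(2) wf m_underL by (simp add: ac_simps)
      next
        fix L2' assume Q': "Q' = G @ L2'" and "replL A M d [Fm (Under A0 C)] L2'"
        then have a: "A = Under A0 C" "d = fst M" "L2' = snd M" by (auto dest: replL_single_Fm)
        with sub have "cut_admissible r A0" "cut_admissible r C" by simp_all
        from cut_reduce_Under[OF this _ p1 p2] prin a(1)
        have "mder r False (fill X (fst M + z1 + z2, D1 @ G @ snd M @ D2), D)" by simp
        then show ?thesis using Q' a inside(2) m_underL by (simp add: ac_simps)
      qed
    qed
  next
    case (m_underR G z A0 C)
    from rp m_underR obtain d G' where S': "S' = (d + z, G')" and q: "replL A M d G G'"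
      using repl_pair_replL by fastforce
    have "repl A M (z, Fm A0 # G) (d + z, Fm A0 # G')"
      using replL_repl[OF replL_frame[OF q, of "[Fm A0]" "[]"]] by simp
    then have "mder r False ((d + z, Fm A0 # G'), C)" by (rule IH) (simp add: m_underR)
    moreover have "r \<longrightarrow> G' \<noteq> [] \<or> d + z \<noteq> {#}"
      using replL_nonempty[OF q] neM by auto
    ultimately show ?thesis using mder_underR wf S' m_underR by simp
  next
    case (m_prodL X z D1 A1 B1 D2 D)
    from rp m_prodL have "repl A M (fill X ({#} + z, D1 @ [Fm (Prod A1 B1)] @ D2)) S'" by simp
    then show ?thesis
    proof (cases rule: repl_outside_or_inside)
      case (outside X' w' D1' D2')
      from outside(2) have "mder r False (fill X' ({#} + w', D1' @ [Fm A1, Fm B1] @ D2'), D)"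
        by (rule IH) (simp add: m_prodL)
      then show ?thesis using mder_prodL[of r False X' w' D1' A1 B1 D2' D] outside(1) wf m_prodL by simp
    next
      case (inside d Q')
      then have a: "A = Prod A1 B1" "d = fst M" "Q' = snd M" by (auto dest: replL_single_Fm)
      with prin obtain z1 L1 z2 L2 where M: "M = (z1 + z2, L1 @ L2)"
        and d1: "mder r False ((z1, L1), A1)" and d2: "mder r False ((z2, L2), B1)" by auto
      have p: "mder r False (fill X (z, D1 @ Fm A1 # Fm B1 # D2), D)" using prem m_prodL by simp
      from sub a(1) have "cut_admissible r A1" "cut_admissible r B1" by simp_all
      from cut_reduce_Prod[OF this d1 d2 p] show ?thesis
        using M a inside(2) m_prodL by (simp add: ac_simps)
    qed
  next
    case (m_prodR z1 L1 A1 z2 L2 B1)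
    have p1: "mder r False ((z1, L1), A1)" and p2: "mder r False ((z2, L2), B1)" using prem m_prodR
      by simp_all
    from rp m_prodR obtain d L' where S': "S' = (d + (z1 + z2), L')" and q: "replL A M d (L1 @ L2) L'"
      using repl_pair_replL by fastforce
    from replL_append_cases[OF q] show ?thesis
    proof (elim disjE exE conjE)
      fix L1' assume "L' = L1' @ L2" and "replL A M d L1 L1'"
      from replL_repl[OF this(2)] have "mder r False ((d + z1, L1'), A1)"
        by (rule IH) (simp add: m_prodR)
      from mder_prodR[OF this p2] show ?thesis using \<open>L' = L1' @ L2\<close> S' wf m_prodR
        by (simp add: ac_simps)
    next
      fix L2' assume "L' = L1 @ L2'" and "replL A M d L2 L2'"
      from replL_repl[OF this(2)] have "mder r False ((d + z2, L2'), B1)"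
        by (rule IH) (simp add: m_prodR)
      from mder_prodR[OF p1 this] show ?thesis using \<open>L' = L1 @ L2'\<close> S' wf m_prodR
        by (simp add: ac_simps)
    qed
  next
    case (m_oneL X z D1 D2 C)
    from rp m_oneL have "repl A M (fill X ({#} + z, D1 @ [Fm One] @ D2)) S'" by simp
    then show ?thesis
    proof (cases rule: repl_outside_or_inside)
      case (outside X' w' D1' D2')
      from outside(2) have "mder r False (fill X' ({#} + w', D1' @ [] @ D2'), C)"
        by (rule IH) (simp add: m_oneL)
      then show ?thesis using mder_oneL[of r False X' w' D1' D2' C] outside(1) m_oneL by simp
    next
      case (inside d Q')
      then have "A = One" "d = fst M" "Q' = snd M" by (auto dest: replL_single_Fm)
      with prin prem[of "(fill X (z, D1 @ D2), C)"] show ?thesis using inside(2) m_oneL by simp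
    qed
  next
    case (m_orL X z D1 A1 D2 C A2)
    have p1: "mder r False (fill X (z, D1 @ Fm A1 # D2), C)"
      and p2: "mder r False (fill X (z, D1 @ Fm A2 # D2), C)"
      using prem m_orL by simp_all
    from rp m_orL have "repl A M (fill X ({#} + z, D1 @ [Fm (Or A1 A2)] @ D2)) S'" by simp
    then show ?thesis
    proof (cases rule: repl_outside_or_inside)
      case (outside X' w' D1' D2')
      from outside(2) have "mder r False (fill X' ({#} + w', D1' @ [Fm A1] @ D2'), C)"
        by (rule IH) (simp add: m_orL)
      moreover from outside(2) have "mder r False (fill X' ({#} + w', D1' @ [Fm A2] @ D2'), C)"
        by (rule IH) (simp add: m_orL)
      ultimately show ?thesis using mder_orL[of r False X' w' D1' A1 D2' C A2] outside(1) wf m_orL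
        by simp
    next
      case (inside d Q')
      then have a: "A = Or A1 A2" "d = fst M" "Q' = snd M" by (auto dest: replL_single_Fm)
      with sub have cut1: "cut_admissible r A1" and cut2: "cut_admissible r A2" by simp_all
      from prin a(1) consider (left) "mder r False (M, A1)" | (right) "mder r False (M, A2)" by auto
      then have "mder r False (fill X (fst M + z, D1 @ snd M @ D2), C)"
      proof cases
        case left
        from cut_admissibleD[OF cut1 this p1 repl_fill_here] show ?thesis .
      next
        case right
        from cut_admissibleD[OF cut2 this p2 repl_fill_here] show ?thesis .
      qed
      then show ?thesis using a inside(2) m_orL by simp
    qed
  next
    case (m_orR1 Y A1 A2)
    from rp m_orR1 have "mder r False (S', A1)" by (intro IH[of Y]) simp_all
    then show ?thesis using mder_orR1 wf m_orR1 by simp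
  next
    case (m_orR2 Y A2 A1)
    from rp m_orR2 have "mder r False (S', A2)" by (intro IH[of Y]) simp_all
    then show ?thesis using mder_orR2 wf m_orR2 by simp
  next
    case (m_andL1 X z D1 A1 D2 C A2)
    have p1: "mder r False (fill X (z, D1 @ Fm A1 # D2), C)" using prem m_andL1 by simp
    from rp m_andL1 have "repl A M (fill X ({#} + z, D1 @ [Fm (And A1 A2)] @ D2)) S'" by simp
    then show ?thesis
    proof (cases rule: repl_outside_or_inside)
      case (outside X' w' D1' D2')
      from outside(2) have "mder r False (fill X' ({#} + w', D1' @ [Fm A1] @ D2'), C)"
        by (rule IH) (simp add: m_andL1)
      then show ?thesis using mder_andL1[of r False X' w' D1' A1 D2' C A2] outside(1) wf m_andL1 by simp
    next
      case (inside d Q')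
      then have a: "A = And A1 A2" "d = fst M" "Q' = snd M" by (auto dest: replL_single_Fm)
      with sub have "cut_admissible r A1" by simp
      moreover from prin a(1) have "mder r False (M, A1)" by simp
      ultimately have "mder r False (fill X (fst M + z, D1 @ snd M @ D2), C)"
        using p1 repl_fill_here by (rule cut_admissibleD)
      then show ?thesis using a inside(2) m_andL1 by simp
    qed
  next
    case (m_andL2 X z D1 A2 D2 C A1)
    have p1: "mder r False (fill X (z, D1 @ Fm A2 # D2), C)" using prem m_andL2 by simp
    from rp m_andL2 have "repl A M (fill X ({#} + z, D1 @ [Fm (And A1 A2)] @ D2)) S'" by simp
    then show ?thesis
    proof (cases rule: repl_outside_or_inside)
      case (outside X' w' D1' D2')
      from outside(2) have "mder r False (fill X' ({#} + w', D1' @ [Fm A2] @ D2'), C)"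
        by (rule IH) (simp add: m_andL2)
      then show ?thesis using mder_andL2[of r False X' w' D1' A2 D2' C A1] outside(1) wf m_andL2 by simp
    next
      case (inside d Q')
      then have a: "A = And A1 A2" "d = fst M" "Q' = snd M" by (auto dest: replL_single_Fm)
      with sub have "cut_admissible r A2" by simp
      moreover from prin a(1) have "mder r False (M, A2)" by simp
      ultimately have "mder r False (fill X (fst M + z, D1 @ snd M @ D2), C)"
        using p1 repl_fill_here by (rule cut_admissibleD)
      then show ?thesis using a inside(2) m_andL2 by simp
    qed
  next
    case (m_andR Y A1 A2)
    from rp m_andR have "mder r False (S', A1)" and "mder r False (S', A2)" by (intro IH[of Y]; simp)+
    then show ?thesis using mder_andR wf m_andR by simp
  next
    case (m_boxL X z D1 A0 D2 C)
    have p1: "mder r False (fill X (z, D1 @ Fm A0 # D2), C)" using prem m_boxL by simp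
    from rp m_boxL have "repl A M (fill X ({#} + z, D1 @ [Br ({#}, [Fm (Box A0)])] @ D2)) S'" by simp
    then show ?thesis
    proof (cases rule: repl_outside_or_inside)
      case (outside X' w' D1' D2')
      from outside(2) have "mder r False (fill X' ({#} + w', D1' @ [Fm A0] @ D2'), C)"
        by (rule IH) (simp add: m_boxL)
      then show ?thesis using mder_boxL[of r False X' w' D1' A0 D2' C] outside(1) wf m_boxL by simp
    next
      case (inside d Q')
      from replL_single_Br[OF inside(1)] obtain N' where d: "d = {#}" and Q': "Q' = [Br N']"
        and "repl A M ({#}, [Fm (Box A0)]) N'" by blast
      from repl_single_Fm[OF this(3)] have a: "A = Box A0" "N' = M" by auto
      with prin sub have d1: "mder r False (({#}, [Br M]), A0)" and cut: "cut_admissible r A0"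
        by simp_all
      have "repl A0 ({#}, [Br M]) (fill X (z, D1 @ Fm A0 # D2)) (fill X (z, D1 @ Br M # D2))"
        using repl_fill_here[of A0 "({#}, [Br M])" X z D1 D2] by simp
      from cut_admissibleD[OF cut d1 p1 this] show ?thesis using d Q' a inside(2) m_boxL by simp
    qed
  next
    case (m_boxR Y A0)
    from rp m_boxR have "repl A M ({#}, [Br Y]) ({#}, [Br S'])"
      using repl_deep[of A M Y S' "{#}" "[]" "[]"] by simp
    then have "mder r False (({#}, [Br S']), A0)" by (rule IH) (simp add: m_boxR)
    then show ?thesis using mder_boxR wf m_boxR by simp
  next
    case (m_diaL X z D1 A0 D2 C)
    have p1: "mder r False (fill X (z, D1 @ Br ({#}, [Fm A0]) # D2), C)" using prem m_diaL by simp
    from rp m_diaL have "repl A M (fill X ({#} + z, D1 @ [Fm (Dia A0)] @ D2)) S'" by simp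
    then show ?thesis
    proof (cases rule: repl_outside_or_inside)
      case (outside X' w' D1' D2')
      from outside(2) have "mder r False (fill X' ({#} + w', D1' @ [Br ({#}, [Fm A0])] @ D2'), C)"
        by (rule IH) (simp add: m_diaL)
      then show ?thesis using mder_diaL[of r False X' w' D1' A0 D2' C] outside(1) wf m_diaL by simp
    next
      case (inside d Q')
      then have a: "A = Dia A0" "d = fst M" "Q' = snd M" by (auto dest: replL_single_Fm)
      with prin obtain Y where M: "M = ({#}, [Br Y])" and d1: "mder r False (Y, A0)" by auto
      from sub a(1) have "cut_admissible r A0" by simp
      from cut_reduce_Dia[OF this d1 p1] have "mder r False (fill X (z, D1 @ Br Y # D2), C)" .
      then show ?thesis using M a inside(2) m_diaL by simp
    qed
  next
    case (m_diaR Y A0)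
    from rp m_diaR obtain d L' where "S' = (d, L')" and "replL A M d [Br Y] L'"
      using repl_pair_replL by fastforce
    then obtain Y' where S': "S' = ({#}, [Br Y'])" and "repl A M Y Y'" by (auto dest: replL_single_Br)
    from this(2) have "mder r False (Y', A0)" by (rule IH) (simp add: m_diaR)
    then show ?thesis using mder_diaR wf S' m_diaR by simp
  next
    case (m_bangL X z A0 G1 G2 C)
    have p1: "mder r False (fill X (z + {#A0#}, G1 @ G2), C)" using prem m_bangL by simp
    from rp m_bangL have "repl A M (fill X ({#} + z, G1 @ [Fm (Bang A0)] @ G2)) S'" by simp
    then show ?thesis
    proof (cases rule: repl_outside_or_inside)
      case (outside X' w' D1' D2')
      from outside(2) have "mder r False (fill X' ({#A0#} + w', D1' @ [] @ D2'), C)"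
        by (rule IH) (simp add: m_bangL ac_simps)
      then show ?thesis using mder_bangL[of r False X' w' A0 D1' D2' C] outside(1) wf m_bangL
        by (simp add: ac_simps)
    next
      case (inside d Q')
      then have a: "A = Bang A0" "d = fst M" "Q' = snd M" by (auto dest: replL_single_Fm)
      with prin obtain A' where M: "M = ({#A'#}, [])" and d1: "mder r False (({#A'#}, []), A0)" by auto
      from sub a(1) have "cut_admissible r A0" by simp
      from cut_reduce_Bang[OF this d1 p1] have "mder r False (fill X (z + {#A'#}, G1 @ G2), C)" .
      then show ?thesis using M a inside(2) m_bangL by (simp add: ac_simps)
    qed
  next
    case (m_bangP X z G1 A0 G2 C)
    from rp m_bangP have "repl A M (fill X ({#A0#} + z, G1 @ [] @ G2)) S'" by (simp add: ac_simps)
    then show ?thesis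
    proof (cases rule: repl_outside_or_inside)
      case (outside X' w' D1' D2')
      from outside(2) have "mder r False (fill X' ({#} + w', D1' @ [Fm A0] @ D2'), C)"
        by (rule IH) (simp add: m_bangP)
      then show ?thesis using mder_bangP[of r False X' w' D1' A0 D2' C] outside(1) wf m_bangP
        by (simp add: ac_simps)
    qed (simp add: replL_Nil)
  next
    case (m_bangR A0 B0)
    with rp show ?thesis using repl_pair_replL[of A M "{#A0#}" "[]" S'] replL_Nil by fastforce
  next
    case (m_bangC G2 z' X z A0 G1 G3 C)
    from rp m_bangC have "repl A M (fill X ({#A0#} + z, G1 @ [Br ({#}, [Br (z', G2)])] @ G3)) S'"
      by (simp add: ac_simps)
    then show ?thesis
    proof (cases rule: repl_outside_or_inside)
      case (outside X' w' D1' D2')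
      from outside(2) have "mder r False (fill X' ({#A0#} + w', D1' @ [Br (z' + {#A0#}, G2)] @ D2'), C)"
        by (rule IH) (simp add: m_bangC ac_simps)
      then show ?thesis
        using mder_bangC[of r G2 z' False X' w' A0 D1' D2' C] outside(1) wf m_bangC
          by (simp add: ac_simps)
    next
      case (inside d Q')
      from replL_single_Br[OF inside(1)] obtain N' where "d = {#}" "Q' = [Br N']"
        and "repl A M ({#}, [Br (z', G2)]) N'" by blast
      then obtain N'' where "N' = ({#}, [Br N''])" and "repl A M (z', G2) N''"
        using repl_pair_replL by (fastforce dest: replL_single_Br)
      then obtain d' G2' where N'': "N'' = (d' + z', G2')" and q: "replL A M d' G2 G2'"
        using repl_pair_replL by blast
      from replL_repl[OF q] have "repl A M (z' + {#A0#}, G2) (d' + (z' + {#A0#}), G2')" .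
      then have "repl A M (fill X (z + {#A0#}, G1 @ Br (z' + {#A0#}, G2) # G3))
          (fill X (z + {#A0#}, G1 @ Br (d' + (z' + {#A0#}), G2') # G3))"
        by (intro repl_fill repl_deep)
      then have "mder r False (fill X (z + {#A0#}, G1 @ Br (d' + (z' + {#A0#}), G2') # G3), C)"
        by (rule IH) (simp add: m_bangC)
      moreover have "r \<longrightarrow> G2' \<noteq> [] \<or> d' + z' \<noteq> {#}"
        using replL_nonempty[OF q] neM by auto
      ultimately show ?thesis
        using mder_bangC[of r G2' "d' + z'" False X z A0 G1 G3 C] \<open>d = {#}\<close> \<open>Q' = [Br N']\<close>
          \<open>N' = ({#}, [Br N''])\<close> N'' inside(2) wf m_bangC by (simp add: ac_simps)
    qed
  next
    case m_cut
    then show ?thesis by simp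
  qed
qed

lemma cut_admissible_step:
  assumes sub: "\<And>F. size F < size A \<Longrightarrow> cut_admissible r F"
  shows "mder r False sa \<Longrightarrow> snd sa = A \<Longrightarrow> mder r False (S, C) \<Longrightarrow> repl A (fst sa) S S' \<Longrightarrow>
    mder r False (S', C)"
proof (induction arbitrary: S S' C rule: mder.induct)
  case (1 ps sa)
  have IH: "mder r False (S'', C)" if "repl A S0 S S''" and "(S0, A) \<in> set ps" for S0 S''
    using conjunct2[OF bspec[OF 1(3) that(2)], rule_format, of S C S''] 1(5) that(1) by simp
  have prem: "\<And>p. p \<in> set ps \<Longrightarrow> mder r False p" using 1(3) by blast
  have "mder r False sa" by (rule mder.intros[OF 1(1)]) (use prem 1(2) in auto)
  then have dM: "mder r False (fst sa, A)" using 1(4) by (metis prod.collapse)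
  have rp: "repl A (fst sa) S S'" by fact
  have wf: "r \<Longrightarrow> onefree_seq (S', C)"
    using mder_onefree[OF dM] mder_onefree[OF 1(5)] repl_onefree[OF rp] by (simp add: onefree_seq_iff)
  have principal: "principal_prems r A (fst sa) \<Longrightarrow> mder r False (S', C)"
    using cut_principal_left[OF dM _ sub, of "(S, C)" S'] 1(5) rp by simp
  from 1(1) show ?case
  proof (cases rule: mrule.cases)
    case (m_ax F)
    with 1(4) rp have "S' = S" by (simp add: repl_axiom)
    with 1(5) show ?thesis by simp
  next
    case m_oneR
    with 1(4) principal show ?thesis by simp
  next
    case (m_overL z1 G B X z2 D1 C0 D2 D)
    have p1: "mder r False ((z1, G), B)" using prem m_overL by simp
    from rp m_overL have "repl A (fill X (z1 + z2, D1 @ (Fm (Over C0 B) # G) @ D2)) S S'" by simp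
    then show ?thesis
    proof (rule repl_by_segment)
      fix X' w' D1' D2'
      assume S': "S' = fill X' (z1 + w', D1' @ (Fm (Over C0 B) # G) @ D2')"
        and h: "\<And>d Q0. repl A (fill X (d + z2, D1 @ Q0 @ D2)) S (fill X' (d + w', D1' @ Q0 @ D2'))"
      from h have "mder r False (fill X' ({#} + w', D1' @ [Fm C0] @ D2'), C)"
        by (rule IH) (use 1(4) m_overL in simp)
      then show ?thesis using mder_overL[OF p1, of X' w' D1' C0 D2' C] S' wf by simp
    qed
  next
    case (m_overR G z B C0)
    with 1(4) have "A = Over C0 B" by simp
    with prem m_overR have "principal_prems r A (fst sa)" by simp
    then show ?thesis by (rule principal)
  next
    case (m_underL z1 G A0 X z2 D1 C0 D2 D)
    have p1: "mder r False ((z1, G), A0)" using prem m_underL by simp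
    from rp m_underL have "repl A (fill X (z1 + z2, D1 @ (G @ [Fm (Under A0 C0)]) @ D2)) S S'" by simp
    then show ?thesis
    proof (rule repl_by_segment)
      fix X' w' D1' D2'
      assume S': "S' = fill X' (z1 + w', D1' @ (G @ [Fm (Under A0 C0)]) @ D2')"
        and h: "\<And>d Q0. repl A (fill X (d + z2, D1 @ Q0 @ D2)) S (fill X' (d + w', D1' @ Q0 @ D2'))"
      from h have "mder r False (fill X' ({#} + w', D1' @ [Fm C0] @ D2'), C)"
        by (rule IH) (use 1(4) m_underL in simp)
      then show ?thesis using mder_underL[OF p1, of X' w' D1' C0 D2' C] S' wf by simp
    qed
  next
    case (m_underR G z A0 C0)
    with 1(4) have "A = Under A0 C0" by simp
    with prem m_underR have "principal_prems r A (fst sa)" by simp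
    then show ?thesis by (rule principal)
  next
    case (m_prodL X z D1 A0 B0 D2 D)
    from rp m_prodL have "repl A (fill X ({#} + z, D1 @ [Fm (Prod A0 B0)] @ D2)) S S'" by simp
    then show ?thesis
    proof (rule repl_by_segment)
      fix X' w' D1' D2'
      assume S': "S' = fill X' ({#} + w', D1' @ [Fm (Prod A0 B0)] @ D2')"
        and h: "\<And>d Q0. repl A (fill X (d + z, D1 @ Q0 @ D2)) S (fill X' (d + w', D1' @ Q0 @ D2'))"
      from h have "mder r False (fill X' ({#} + w', D1' @ [Fm A0, Fm B0] @ D2'), C)"
        by (rule IH) (use 1(4) m_prodL in simp)
      then show ?thesis using mder_prodL[of r False X' w' D1' A0 B0 D2' C] S' wf by simp
    qed
  next
    case (m_prodR z1 L1 A0 z2 L2 B0)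
    with 1(4) have "A = Prod A0 B0" by simp
    moreover have "mder r False ((z1, L1), A0)" and "mder r False ((z2, L2), B0)"
      using prem m_prodR by simp_all
    ultimately have "principal_prems r A (fst sa)" using m_prodR by simp blast
    then show ?thesis by (rule principal)
  next
    case (m_oneL X z D1 D2 A0)
    from rp m_oneL have "repl A (fill X ({#} + z, D1 @ [Fm One] @ D2)) S S'" by simp
    then show ?thesis
    proof (rule repl_by_segment)
      fix X' w' D1' D2'
      assume S': "S' = fill X' ({#} + w', D1' @ [Fm One] @ D2')"
        and h: "\<And>d Q0. repl A (fill X (d + z, D1 @ Q0 @ D2)) S (fill X' (d + w', D1' @ Q0 @ D2'))"
      from h have "mder r False (fill X' ({#} + w', D1' @ [] @ D2'), C)"
        by (rule IH) (use 1(4) m_oneL in simp)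
      then show ?thesis using mder_oneL[of r False X' w' D1' D2' C] S' m_oneL by simp
    qed
  next
    case (m_orL X z D1 A1 D2 C0 A2)
    from rp m_orL have "repl A (fill X ({#} + z, D1 @ [Fm (Or A1 A2)] @ D2)) S S'" by simp
    then show ?thesis
    proof (rule repl_by_segment)
      fix X' w' D1' D2'
      assume S': "S' = fill X' ({#} + w', D1' @ [Fm (Or A1 A2)] @ D2')"
        and h: "\<And>d Q0. repl A (fill X (d + z, D1 @ Q0 @ D2)) S (fill X' (d + w', D1' @ Q0 @ D2'))"
      from h have "mder r False (fill X' ({#} + w', D1' @ [Fm A1] @ D2'), C)"
        by (rule IH) (use 1(4) m_orL in simp)
      moreover from h have "mder r False (fill X' ({#} + w', D1' @ [Fm A2] @ D2'), C)"
        by (rule IH) (use 1(4) m_orL in simp)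
      ultimately show ?thesis using mder_orL[of r False X' w' D1' A1 D2' C A2] S' wf by simp
    qed
  next
    case (m_orR1 Y A1 A2)
    with 1(4) have "A = Or A1 A2" by simp
    with prem m_orR1 have "principal_prems r A (fst sa)" by simp
    then show ?thesis by (rule principal)
  next
    case (m_orR2 Y A2 A1)
    with 1(4) have "A = Or A1 A2" by simp
    with prem m_orR2 have "principal_prems r A (fst sa)" by simp
    then show ?thesis by (rule principal)
  next
    case (m_andL1 X z D1 A1 D2 C0 A2)
    from rp m_andL1 have "repl A (fill X ({#} + z, D1 @ [Fm (And A1 A2)] @ D2)) S S'" by simp
    then show ?thesis
    proof (rule repl_by_segment)
      fix X' w' D1' D2'
      assume S': "S' = fill X' ({#} + w', D1' @ [Fm (And A1 A2)] @ D2')"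
        and h: "\<And>d Q0. repl A (fill X (d + z, D1 @ Q0 @ D2)) S (fill X' (d + w', D1' @ Q0 @ D2'))"
      from h have "mder r False (fill X' ({#} + w', D1' @ [Fm A1] @ D2'), C)"
        by (rule IH) (use 1(4) m_andL1 in simp)
      then show ?thesis using mder_andL1[of r False X' w' D1' A1 D2' C A2] S' wf by simp
    qed
  next
    case (m_andL2 X z D1 A2 D2 C0 A1)
    from rp m_andL2 have "repl A (fill X ({#} + z, D1 @ [Fm (And A1 A2)] @ D2)) S S'" by simp
    then show ?thesis
    proof (rule repl_by_segment)
      fix X' w' D1' D2'
      assume S': "S' = fill X' ({#} + w', D1' @ [Fm (And A1 A2)] @ D2')"
        and h: "\<And>d Q0. repl A (fill X (d + z, D1 @ Q0 @ D2)) S (fill X' (d + w', D1' @ Q0 @ D2'))"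
      from h have "mder r False (fill X' ({#} + w', D1' @ [Fm A2] @ D2'), C)"
        by (rule IH) (use 1(4) m_andL2 in simp)
      then show ?thesis using mder_andL2[of r False X' w' D1' A2 D2' C A1] S' wf by simp
    qed
  next
    case (m_andR Y A1 A2)
    with 1(4) have "A = And A1 A2" by simp
    with prem m_andR have "principal_prems r A (fst sa)" by simp
    then show ?thesis by (rule principal)
  next
    case (m_boxL X z D1 A0 D2 B0)
    from rp m_boxL have "repl A (fill X ({#} + z, D1 @ [Br ({#}, [Fm (Box A0)])] @ D2)) S S'" by simp
    then show ?thesis
    proof (rule repl_by_segment)
      fix X' w' D1' D2'
      assume S': "S' = fill X' ({#} + w', D1' @ [Br ({#}, [Fm (Box A0)])] @ D2')"
        and h: "\<And>d Q0. repl A (fill X (d + z, D1 @ Q0 @ D2)) S (fill X' (d + w', D1' @ Q0 @ D2'))"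
      from h have "mder r False (fill X' ({#} + w', D1' @ [Fm A0] @ D2'), C)"
        by (rule IH) (use 1(4) m_boxL in simp)
      then show ?thesis using mder_boxL[of r False X' w' D1' A0 D2' C] S' wf by simp
    qed
  next
    case (m_boxR Y A0)
    with 1(4) have "A = Box A0" by simp
    with prem m_boxR have "principal_prems r A (fst sa)" by simp
    then show ?thesis by (rule principal)
  next
    case (m_diaL X z D1 A0 D2 B0)
    from rp m_diaL have "repl A (fill X ({#} + z, D1 @ [Fm (Dia A0)] @ D2)) S S'" by simp
    then show ?thesis
    proof (rule repl_by_segment)
      fix X' w' D1' D2'
      assume S': "S' = fill X' ({#} + w', D1' @ [Fm (Dia A0)] @ D2')"
        and h: "\<And>d Q0. repl A (fill X (d + z, D1 @ Q0 @ D2)) S (fill X' (d + w', D1' @ Q0 @ D2'))"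
      from h have "mder r False (fill X' ({#} + w', D1' @ [Br ({#}, [Fm A0])] @ D2'), C)"
        by (rule IH) (use 1(4) m_diaL in simp)
      then show ?thesis using mder_diaL[of r False X' w' D1' A0 D2' C] S' wf by simp
    qed
  next
    case (m_diaR Y A0)
    with 1(4) have "A = Dia A0" by simp
    with prem m_diaR have "principal_prems r A (fst sa)" by simp
    then show ?thesis by (rule principal)
  next
    case (m_bangL X z A0 G1 G2 B0)
    from rp m_bangL have "repl A (fill X ({#} + z, G1 @ [Fm (Bang A0)] @ G2)) S S'" by simp
    then show ?thesis
    proof (rule repl_by_segment)
      fix X' w' D1' D2'
      assume S': "S' = fill X' ({#} + w', D1' @ [Fm (Bang A0)] @ D2')"
        and h: "\<And>d Q0. repl A (fill X (d + z, G1 @ Q0 @ G2)) S (fill X' (d + w', D1' @ Q0 @ D2'))"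
      from h have "mder r False (fill X' ({#A0#} + w', D1' @ [] @ D2'), C)"
        by (rule IH) (use 1(4) m_bangL in \<open>simp add: ac_simps\<close>)
      then show ?thesis using mder_bangL[of r False X' w' A0 D1' D2' C] S' wf by (simp add: ac_simps)
    qed
  next
    case (m_bangP X z G1 A0 G2 B0)
    from rp m_bangP have "repl A (fill X ({#A0#} + z, G1 @ [] @ G2)) S S'" by (simp add: ac_simps)
    then show ?thesis
    proof (rule repl_by_segment)
      fix X' w' D1' D2'
      assume S': "S' = fill X' ({#A0#} + w', D1' @ [] @ D2')"
        and h: "\<And>d Q0. repl A (fill X (d + z, G1 @ Q0 @ G2)) S (fill X' (d + w', D1' @ Q0 @ D2'))"
      from h have "mder r False (fill X' ({#} + w', D1' @ [Fm A0] @ D2'), C)"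
        by (rule IH) (use 1(4) m_bangP in simp)
      then show ?thesis using mder_bangP[of r False X' w' D1' A0 D2' C] S' wf by (simp add: ac_simps)
    qed
  next
    case (m_bangR A0 B0)
    with 1(4) have "A = Bang B0" by simp
    with prem m_bangR have "principal_prems r A (fst sa)" by simp
    then show ?thesis by (rule principal)
  next
    case (m_bangC G2 z' X z A0 G1 G3 B0)
    from rp m_bangC have "repl A (fill X ({#A0#} + z, G1 @ [Br ({#}, [Br (z', G2)])] @ G3)) S S'"
      by (simp add: ac_simps)
    then show ?thesis
    proof (rule repl_by_segment)
      fix X' w' D1' D2'
      assume S': "S' = fill X' ({#A0#} + w', D1' @ [Br ({#}, [Br (z', G2)])] @ D2')"
        and h: "\<And>d Q0. repl A (fill X (d + z, G1 @ Q0 @ G3)) S (fill X' (d + w', D1' @ Q0 @ D2'))"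
      from h have "mder r False (fill X' ({#A0#} + w', D1' @ [Br (z' + {#A0#}, G2)] @ D2'), C)"
        by (rule IH) (use 1(4) m_bangC in \<open>simp add: ac_simps\<close>)
      then show ?thesis
        using mder_bangC[of r G2 z' False X' w' A0 D1' D2' C] S' wf m_bangC by (simp add: ac_simps)
    qed
  next
    case m_cut
    then show ?thesis by simp
  qed
qed

lemma cut_admissible_all: "cut_admissible r A"
proof (induction A rule: measure_induct_rule[of size])
  case (less A)
  show ?case unfolding cut_admissible_def
  proof (intro allI impI)
    fix M S S' C
    assume "mder r False (M, A)" "mder r False (S, C)" "repl A M S S'"
    with cut_admissible_step[OF less, where sa = "(M, A)"] show "mder r False (S', C)" by simp
  qed
qed

lemma mrule_cut_cases: "mrule r True ps s \<Longrightarrow>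
   (\<exists>xi P A X z G1 G2 C. ps = [((xi, P), A), (fill X (z, G1 @ [Fm A] @ G2), C)] \<and>
      s = (fill X (xi + z, G1 @ P @ G2), C)) \<or> mrule r False ps s"
  apply (induction rule: mrule.induct)
                         prefer 24 apply blast
  apply (rule disjI2, rule mrule.intros, (assumption)?)+
  done

theorem mder_cut_elim: "mder r True s \<Longrightarrow> mder r False s"
proof (induction rule: mder.induct)
  case (1 ps s)
  have prem: "\<And>p. p \<in> set ps \<Longrightarrow> mder r False p" using 1(3) by blast
  from mrule_cut_cases[OF 1(1)] show ?case
  proof (elim disjE exE conjE)
    fix xi P A X z G1 G2 C
    assume ps: "ps = [((xi, P), A), (fill X (z, G1 @ [Fm A] @ G2), C)]"
      and s: "s = (fill X (xi + z, G1 @ P @ G2), C)"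
    from ps prem have "mder r False ((xi, P), A)" and "mder r False (fill X (z, G1 @ Fm A # G2), C)"
      by simp_all
    from cut_admissibleD[OF cut_admissible_all this repl_fill_here] show ?thesis using s by simp
  next
    assume "mrule r False ps s"
    then show ?thesis by (rule mder.intros) (use prem 1(2) in auto)
  qed
qed

lemma fder_ruleI:
  "frule r c ps s \<Longrightarrow> (\<And>p. p \<in> set ps \<Longrightarrow> fder r c p) \<Longrightarrow>
    sfree (fst s) \<Longrightarrow> (r \<Longrightarrow> onefree_seq s) \<Longrightarrow>
    fder r c s"
  by (rule fder.intros) auto

lemma fder_sfree: "fder r c s \<Longrightarrow> sfree (fst s)"
  by (induction rule: fder.induct) auto

lemma fder_onefree: "fder r c s \<Longrightarrow> r \<Longrightarrow> onefree_seq s"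
  by (induction rule: fder.induct) auto

definition fseq_ok :: "bool \<Rightarrow> ctx \<Rightarrow> tterm list \<Rightarrow> formula \<Rightarrow> bool" where
  "fseq_ok r X L C = (sfree (fill X ({#}, L)) \<and> (r \<longrightarrow> onefree_seq (fill X ({#}, L), C)))"

lemma fseq_ok_iff:
  "fseq_ok r X L C = (sfree_ctx X \<and> (\<forall>t\<in>set L. sfree_t t) \<and> (r \<longrightarrow> onefree_ctx X \<and> (\<forall>t\<in>set L. onefree_t t) \<and> onefree C))"
  by (auto simp: fseq_ok_def sfree_fill sfree_pair onefree_seq_iff onefree_meta_fill onefree_meta_pair)

lemma fseq_ok_set: "set L = set L' \<Longrightarrow> fseq_ok r X L C = fseq_ok r X L' C"
  by (simp add: fseq_ok_iff)

lemma fder_fseq_ok: "fder r c (fill X ({#}, L), C) \<Longrightarrow> fseq_ok r X L C"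
  unfolding fseq_ok_def using fder_sfree fder_onefree by fastforce

lemma fder_ruleI_ok:
  "frule r c ps (fill X ({#}, L), C) \<Longrightarrow>
    (\<And>p. p \<in> set ps \<Longrightarrow> fder r c p) \<Longrightarrow> fseq_ok r X L C \<Longrightarrow>
    fder r c (fill X ({#}, L), C)"
  unfolding fseq_ok_def by (rule fder_ruleI) auto

lemma fseq_ok_mset:
  "mset L = mset L' \<Longrightarrow> fseq_ok r X L C \<Longrightarrow> fseq_ok r X L' C"
  by (metis fseq_ok_set set_mset_mset)

lemma fder_bangP2:
  "fder r c (fill X ({#}, D1 @ Phi @ Fm (Bang A) # D2), C) \<Longrightarrow>
    fder r c (fill X ({#}, D1 @ Fm (Bang A) # Phi @ D2), C)"
proof -
  assume p: "fder r c (fill X ({#}, D1 @ Phi @ Fm (Bang A) # D2), C)"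
  have ok: "fseq_ok r X (D1 @ Fm (Bang A) # Phi @ D2) C"
    using fder_fseq_ok[OF p] fseq_ok_set[of "D1 @ Phi @ Fm (Bang A) # D2" "D1 @ Fm (Bang A) # Phi @ D2"]
      by auto
  show ?thesis using fder_ruleI_ok[OF f_bangP2[of r c X D1 Phi A D2 C]] p ok by simp
qed

lemma fder_bangP1:
  "fder r c (fill X ({#}, D1 @ Fm (Bang A) # Phi @ D2), C) \<Longrightarrow>
    fder r c (fill X ({#}, D1 @ Phi @ Fm (Bang A) # D2), C)"
proof -
  assume p: "fder r c (fill X ({#}, D1 @ Fm (Bang A) # Phi @ D2), C)"
  have ok: "fseq_ok r X (D1 @ Phi @ Fm (Bang A) # D2) C"
    using fder_fseq_ok[OF p] fseq_ok_set[of "D1 @ Phi @ Fm (Bang A) # D2" "D1 @ Fm (Bang A) # Phi @ D2"]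
      by auto
  show ?thesis using fder_ruleI_ok[OF f_bangP1[of r c X D1 A Phi D2 C]] p ok by simp
qed

lemma fder_ax: "(r \<Longrightarrow> onefree A) \<Longrightarrow> fder r c (({#}, [Fm A]), A)"
  by (rule fder_ruleI[OF f_ax]) (auto simp: sfree_def onefree_seq_def)

lemma fder_oneR: "\<not> r \<Longrightarrow> fder r c (({#}, []), One)"
  by (rule fder_ruleI[OF f_oneR]) (auto simp: sfree_def)

lemma fder_overL:
  "fder r c (({#}, G), B) \<Longrightarrow> fder r c (fill X ({#}, D1 @ Fm C # D2), D) \<Longrightarrow>
    fseq_ok r X (D1 @ Fm (Over C B) # G @ D2) D \<Longrightarrow>
    fder r c (fill X ({#}, D1 @ Fm (Over C B) # G @ D2), D)"
  using fder_ruleI_ok[OF f_overL[of r c G B X D1 C D2 D]] by fastforce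

lemma fder_overR:
  "(r \<longrightarrow> G \<noteq> []) \<Longrightarrow> fder r c (({#}, G @ [Fm B]), C) \<Longrightarrow>
    fseq_ok r Hole G (Over C B) \<Longrightarrow> fder r c (({#}, G), Over C B)"
  using fder_ruleI[OF f_overR[of r G c B C]] unfolding fseq_ok_def by simp

lemma fder_underL:
  "fder r c (({#}, G), A) \<Longrightarrow> fder r c (fill X ({#}, D1 @ Fm C # D2), D) \<Longrightarrow>
    fseq_ok r X (D1 @ G @ Fm (Under A C) # D2) D \<Longrightarrow>
    fder r c (fill X ({#}, D1 @ G @ Fm (Under A C) # D2), D)"
  using fder_ruleI_ok[OF f_underL[of r c G A X D1 C D2 D]] by fastforce

lemma fder_underR:
  "(r \<longrightarrow> G \<noteq> []) \<Longrightarrow> fder r c (({#}, Fm A # G), C) \<Longrightarrow>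
    fseq_ok r Hole G (Under A C) \<Longrightarrow> fder r c (({#}, G), Under A C)"
  using fder_ruleI[OF f_underR[of r G c A C]] unfolding fseq_ok_def by simp

lemma fder_prodL:
  "fder r c (fill X ({#}, D1 @ Fm A # Fm B # D2), D) \<Longrightarrow>
    fseq_ok r X (D1 @ Fm (Prod A B) # D2) D \<Longrightarrow>
    fder r c (fill X ({#}, D1 @ Fm (Prod A B) # D2), D)"
  using fder_ruleI_ok[OF f_prodL[of r c X D1 A B D2 D]] by simp

lemma fder_prodR:
  "fder r c (({#}, D), A) \<Longrightarrow> fder r c (({#}, G), B) \<Longrightarrow>
    fseq_ok r Hole (D @ G) (Prod A B) \<Longrightarrow> fder r c (({#}, D @ G), Prod A B)"
  using fder_ruleI[OF f_prodR[of r c D A G B]] unfolding fseq_ok_def by fastforce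

lemma fder_oneL:
  "\<not> r \<Longrightarrow> fder r c (fill X ({#}, D1 @ D2), A) \<Longrightarrow>
    fseq_ok r X (D1 @ Fm One # D2) A \<Longrightarrow> fder r c (fill X ({#}, D1 @ Fm One # D2), A)"
  using fder_ruleI_ok[OF f_oneL[of r c X D1 D2 A]] by simp

lemma fder_orL:
  "fder r c (fill X ({#}, D1 @ Fm A1 # D2), C) \<Longrightarrow>
    fder r c (fill X ({#}, D1 @ Fm A2 # D2), C) \<Longrightarrow>
    fseq_ok r X (D1 @ Fm (Or A1 A2) # D2) C \<Longrightarrow>
    fder r c (fill X ({#}, D1 @ Fm (Or A1 A2) # D2), C)"
  using fder_ruleI_ok[OF f_orL[of r c X D1 A1 D2 C A2]] by fastforce

lemma fder_orR1:
  "fder r c (Y, A1) \<Longrightarrow> (r \<Longrightarrow> onefree A2) \<Longrightarrow>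
    fder r c (Y, Or A1 A2)"
  by (rule fder_ruleI[OF f_orR1]) (auto dest: fder_sfree fder_onefree simp: onefree_seq_iff)

lemma fder_orR2:
  "fder r c (Y, A2) \<Longrightarrow> (r \<Longrightarrow> onefree A1) \<Longrightarrow>
    fder r c (Y, Or A1 A2)"
  by (rule fder_ruleI[OF f_orR2]) (auto dest: fder_sfree fder_onefree simp: onefree_seq_iff)

lemma fder_andL1:
  "fder r c (fill X ({#}, D1 @ Fm A1 # D2), C) \<Longrightarrow>
    fseq_ok r X (D1 @ Fm (And A1 A2) # D2) C \<Longrightarrow>
    fder r c (fill X ({#}, D1 @ Fm (And A1 A2) # D2), C)"
  using fder_ruleI_ok[OF f_andL1[of r c X D1 A1 D2 C A2]] by simp

lemma fder_andL2:
  "fder r c (fill X ({#}, D1 @ Fm A2 # D2), C) \<Longrightarrow>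
    fseq_ok r X (D1 @ Fm (And A1 A2) # D2) C \<Longrightarrow>
    fder r c (fill X ({#}, D1 @ Fm (And A1 A2) # D2), C)"
  using fder_ruleI_ok[OF f_andL2[of r c X D1 A2 D2 C A1]] by simp

lemma fder_andR:
  "fder r c (Y, A1) \<Longrightarrow> fder r c (Y, A2) \<Longrightarrow> fder r c (Y, And A1 A2)"
  by (rule fder_ruleI[OF f_andR]) (auto dest: fder_sfree fder_onefree simp: onefree_seq_iff)

lemma fder_boxL:
  "fder r c (fill X ({#}, D1 @ Fm A # D2), B) \<Longrightarrow>
    fseq_ok r X (D1 @ Br ({#}, [Fm (Box A)]) # D2) B \<Longrightarrow>
    fder r c (fill X ({#}, D1 @ Br ({#}, [Fm (Box A)]) # D2), B)"
  using fder_ruleI_ok[OF f_boxL[of r c X D1 A D2 B]] by simp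

lemma fder_boxR: "fder r c (({#}, [Br Y]), A) \<Longrightarrow> fder r c (Y, Box A)"
proof -
  assume p: "fder r c (({#}, [Br Y]), A)"
  have sf: "sfree Y" using fder_sfree[OF p] by (simp add: sfree_pair sfree_t_Br)
  have wf: "r \<Longrightarrow> onefree_seq (Y, Box A)" using fder_onefree[OF p]
    by (simp add: onefree_seq_iff onefree_meta_pair onefree_t_Br)
  show ?thesis by (rule fder_ruleI[OF f_boxR]) (use p sf wf in auto)
qed

lemma fder_diaL:
  "fder r c (fill X ({#}, D1 @ Br ({#}, [Fm A]) # D2), B) \<Longrightarrow>
    fseq_ok r X (D1 @ Fm (Dia A) # D2) B \<Longrightarrow>
    fder r c (fill X ({#}, D1 @ Fm (Dia A) # D2), B)"
  using fder_ruleI_ok[OF f_diaL[of r c X D1 A D2 B]] by simp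

lemma fder_diaR: "fder r c (Y, A) \<Longrightarrow> fder r c (({#}, [Br Y]), Dia A)"
proof -
  assume p: "fder r c (Y, A)"
  have sf: "sfree ({#}, [Br Y])" using fder_sfree[OF p] by (simp add: sfree_pair sfree_t_Br)
  have wf: "r \<Longrightarrow> onefree_seq (({#}, [Br Y]), Dia A)" using fder_onefree[OF p]
    by (simp add: onefree_seq_iff onefree_meta_pair onefree_t_Br)
  show ?thesis by (rule fder_ruleI[OF f_diaR]) (use p sf wf in auto)
qed

lemma fder_bangL:
  "fder r c (fill X ({#}, D1 @ Fm A # D2), C) \<Longrightarrow>
    fder r c (fill X ({#}, D1 @ Fm (Bang A) # D2), C)"
proof -
  assume p: "fder r c (fill X ({#}, D1 @ Fm A # D2), C)"
  have "fseq_ok r X (D1 @ Fm (Bang A) # D2) C" using fder_fseq_ok[OF p] by (simp add: fseq_ok_iff)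
  then show ?thesis using fder_ruleI_ok[OF f_bangL[of r c X D1 A D2 C]] p by simp
qed

lemma fder_bangR:
  "fder r c (({#}, [Fm (Bang A)]), B) \<Longrightarrow> fder r c (({#}, [Fm (Bang A)]), Bang B)"
proof -
  assume p: "fder r c (({#}, [Fm (Bang A)]), B)"
  have sf: "sfree ({#}, [Fm (Bang A)])" by (simp add: sfree_pair)
  have wf: "r \<Longrightarrow> onefree_seq (({#}, [Fm (Bang A)]), Bang B)" using fder_onefree[OF p]
    by (simp add: onefree_seq_iff onefree_meta_pair)
  show ?thesis by (rule fder_ruleI[OF f_bangR]) (use p sf wf in auto)
qed

lemma fder_bangC: "(r \<longrightarrow> G2 \<noteq> []) \<Longrightarrow> fder r c (fill X ({#}, Fm (Bang A) # G1 @ Br ({#}, Fm (Bang A) # G2) # G3), C) \<Longrightarrow>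
   fder r c (fill X ({#}, Fm (Bang A) # G1 @ Br ({#}, [Br ({#}, G2)]) # G3), C)"
proof -
  assume c: "r \<longrightarrow> G2 \<noteq> []"
    and p: "fder r c (fill X ({#}, Fm (Bang A) # G1 @ Br ({#}, Fm (Bang A) # G2) # G3), C)"
  have "fseq_ok r X (Fm (Bang A) # G1 @ Br ({#}, [Br ({#}, G2)]) # G3) C" using fder_fseq_ok[OF p]
    by (simp add: fseq_ok_iff sfree_t_Br sfree_pair onefree_t_Br onefree_meta_pair)
  then show ?thesis using fder_ruleI_ok[OF f_bangC[of r G2 c X A G1 G3 C]] c p by simp
qed

section \<open>From M' to F: stoup formulae become banged formulae\<close>

text \<open>stoup_list z is an arbitrary enumeration of z; the order is irrelevant since the
  banged formulae it produces can be permuted freely in F.\<close>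

definition stoup_list :: "stoup \<Rightarrow> formula list" where
  "stoup_list z = (SOME xs. mset xs = z)"

lemma mset_stoup_list[simp]: "mset (stoup_list z) = z"
  unfolding stoup_list_def by (rule someI_ex) (rule ex_mset)

definition bang_list :: "formula list \<Rightarrow> tterm list" where
  "bang_list xs = map (\<lambda>A. Fm (Bang A)) xs"

abbreviation bangs :: "stoup \<Rightarrow> tterm list" where
  "bangs z \<equiv> bang_list (stoup_list z)"

lemma bang_list_simps[simp]:
  "bang_list [] = []" "bang_list (x # xs) = Fm (Bang x) # bang_list xs" "bang_list (xs @ ys) = bang_list xs @ bang_list ys"
  by (simp_all add: bang_list_def)

lemma stoup_list_empty[simp]: "stoup_list {#} = []"
  using mset_stoup_list[of "{#}"] by (simp del: mset_stoup_list)

lemma stoup_list_single[simp]: "stoup_list {#A#} = [A]"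
  using mset_stoup_list[of "{#A#}"] by (cases "stoup_list {#A#}") (auto simp del: mset_stoup_list)

lemma set_stoup_list[simp]: "set (stoup_list z) = set_mset z"
  by (metis mset_stoup_list set_mset_mset)

fun unstoup_t :: "tterm \<Rightarrow> tterm" where
  "unstoup_t (Fm A) = Fm A"
| "unstoup_t (Br (z, G)) = Br ({#}, bangs z @ map unstoup_t G)"

definition unstoup :: "meta \<Rightarrow> meta" where
  "unstoup M = ({#}, bangs (fst M) @ map unstoup_t (snd M))"

lemma unstoup_t_Br: "unstoup_t (Br N) = Br (unstoup N)"
  by (cases N) (simp add: unstoup_def)

fun unstoup_ctx :: "ctx \<Rightarrow> ctx" where
  "unstoup_ctx Hole = Hole"
| "unstoup_ctx (CBr z G1 c G2) = CBr {#} (bangs z @ map unstoup_t G1) (unstoup_ctx c) (map unstoup_t G2)"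

lemma unstoup_fill: "unstoup (fill X N) = fill (unstoup_ctx X) (unstoup N)"
  by (induction X) (simp_all add: unstoup_def unstoup_t_Br)

lemma unstoup_pair: "unstoup (z, L) = ({#}, bangs z @ map unstoup_t L)"
  by (simp add: unstoup_def)

lemma sfree_unstoup_t: "sfree_t (unstoup_t t)"
  by (induction t rule: unstoup_t.induct) (auto simp: bang_list_def)

lemma sfree_unstoup: "sfree (unstoup N)"
  by (auto simp: unstoup_def sfree_pair sfree_unstoup_t bang_list_def)

lemma unstoup_t_sfree: "sfree_t t \<Longrightarrow> unstoup_t t = t"
  by (induction t rule: unstoup_t.induct) (auto simp: map_idI)

lemma unstoup_sfree: "sfree M \<Longrightarrow> unstoup M = M"
  by (cases M) (simp add: unstoup_def sfree_pair unstoup_t_sfree map_idI)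

lemma onefree_unstoup_t: "onefree_t t \<Longrightarrow> onefree_t (unstoup_t t)"
  by (induction t rule: unstoup_t.induct) (auto simp: bang_list_def)

lemma onefree_meta_unstoup: "onefree_meta N \<Longrightarrow> onefree_meta (unstoup N)"
  by (cases N) (auto simp: unstoup_def onefree_meta_pair onefree_unstoup_t bang_list_def)

lemma onefree_seq_unstoup: "onefree_seq (N, C) \<Longrightarrow> onefree_seq (unstoup N, C)"
  by (simp add: onefree_seq_iff onefree_meta_unstoup)

lemma mset_bang_list: "mset (bang_list xs) = image_mset (\<lambda>A. Fm (Bang A)) (mset xs)"
  by (simp add: bang_list_def)

lemma fder_bangs_leftward:
  "fder r c (fill X ({#}, D1 @ Phi @ bang_list xs @ D2), C) \<Longrightarrow>
    fder r c (fill X ({#}, D1 @ bang_list xs @ Phi @ D2), C)"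
proof (induction xs arbitrary: D1)
  case Nil
  then show ?case by simp
next
  case (Cons x xs)
  have "fder r c (fill X ({#}, D1 @ Fm (Bang x) # Phi @ (bang_list xs @ D2)), C)"
    using fder_bangP2[of r c X D1 Phi x "bang_list xs @ D2" C] Cons.prems by simp
  then have "fder r c (fill X ({#}, (D1 @ [Fm (Bang x)]) @ Phi @ bang_list xs @ D2), C)" by simp
  from Cons.IH[OF this] show ?case by simp
qed

lemma fder_bangs_rightward:
  "fder r c (fill X ({#}, D1 @ bang_list xs @ Phi @ D2), C) \<Longrightarrow>
    fder r c (fill X ({#}, D1 @ Phi @ bang_list xs @ D2), C)"
proof (induction xs arbitrary: D2 rule: rev_induct)
  case Nil
  then show ?case by simp
next
  case (snoc x xs)
  have "fder r c (fill X ({#}, (D1 @ bang_list xs) @ Phi @ Fm (Bang x) # D2), C)"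
    using fder_bangP1[of r c X "D1 @ bang_list xs" x Phi D2 C] snoc.prems by simp
  then have "fder r c (fill X ({#}, D1 @ bang_list xs @ Phi @ (Fm (Bang x) # D2)), C)" by simp
  from snoc.IH[OF this] show ?case by simp
qed

lemma fder_bangs_perm:
  "mset xs = mset ys \<Longrightarrow> fder r c (fill X ({#}, D1 @ bang_list xs @ D2), C) \<Longrightarrow>
    fder r c (fill X ({#}, D1 @ bang_list ys @ D2), C)"
proof (induction ys arbitrary: xs D1)
  case Nil
  then show ?case by simp
next
  case (Cons y ys)
  have "y \<in> set xs" using Cons.prems(1) by (metis list.set_intros(1) set_mset_mset)
  then obtain xs1 xs2 where xs: "xs = xs1 @ y # xs2" by (meson split_list)
  have "fder r c (fill X ({#}, D1 @ bang_list xs1 @ Fm (Bang y) # (bang_list xs2 @ D2)), C)"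
    using Cons.prems(2) xs by simp
  then have "fder r c (fill X ({#}, D1 @ Fm (Bang y) # bang_list xs1 @ (bang_list xs2 @ D2)), C)"
    by (rule fder_bangP2)
  then have "fder r c (fill X ({#}, (D1 @ [Fm (Bang y)]) @ bang_list (xs1 @ xs2) @ D2), C)" by simp
  moreover have "mset (xs1 @ xs2) = mset ys" using Cons.prems(1) xs by simp
  ultimately show ?case using Cons.IH by fastforce
qed

lemma bangs_eq_Nil_iff: "(bangs z = []) = (z = {#})"
  by (metis bang_list_simps(1) stoup_list_empty map_is_Nil_conv bang_list_def mset_stoup_list mset_zero_iff)

lemma fseq_ok_unstoup:
  "(r \<Longrightarrow> onefree_seq (fill X (w, L), C)) \<Longrightarrow>
    fseq_ok r (unstoup_ctx X) (bangs w @ map unstoup_t L) C"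
proof -
  assume a: "r \<Longrightarrow> onefree_seq (fill X (w, L), C)"
  have "sfree (unstoup (fill X (w, L)))" by (rule sfree_unstoup)
  moreover have "r \<Longrightarrow> onefree_seq (unstoup (fill X (w, L)), C)"
    using a onefree_seq_unstoup by blast
  ultimately show ?thesis unfolding fseq_ok_def by (simp add: unstoup_fill unstoup_pair)
qed

lemma fseq_ok_unstoup_Hole:
  "(r \<Longrightarrow> onefree_seq ((w, L), C)) \<Longrightarrow>
    fseq_ok r Hole (bangs w @ map unstoup_t L) C"
  using fseq_ok_unstoup[of r Hole w L C] by simp

lemma mder_imp_fder: "mder r False s \<Longrightarrow> fder r False (unstoup (fst s), snd s)"
proof (induction rule: mder.induct)
  case (1 ps s)
  have IH: "\<And>S0 C0. (S0, C0) \<in> set ps \<Longrightarrow> fder r False (unstoup S0, C0)"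
    using 1(3) by fastforce
  have wf: "r \<Longrightarrow> onefree_seq s" using 1(2) by simp
  from 1(1) show ?case
  proof (cases rule: mrule.cases)
    case (m_ax A)
    then show ?thesis using fder_ax[of r A False] wf by (simp add: unstoup_pair onefree_seq_def)
  next
    case m_oneR
    then show ?thesis using fder_oneR[of r False] by (simp add: unstoup_pair)
  next
    case (m_overL z1 G B X z2 D1 C D2 D)
    let ?X = "unstoup_ctx X" and ?D1 = "map unstoup_t D1" and ?D2 = "map unstoup_t D2"
      and ?G = "map unstoup_t G"
    have p1: "fder r False (({#}, bangs z1 @ ?G), B)" using IH[of "(z1, G)" B] m_overL
      by (simp add: unstoup_pair)
    have p2: "fder r False (fill ?X ({#}, (bangs z2 @ ?D1) @ Fm C # ?D2), D)"
      using IH[of "fill X (z2, D1 @ [Fm C] @ D2)" D] m_overL by (simp add: unstoup_pair unstoup_fill)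
    have ok: "fseq_ok r ?X (bangs (z1 + z2) @ ?D1 @ Fm (Over C B) # ?G @ ?D2) D"
      using fseq_ok_unstoup[of r X "z1 + z2" "D1 @ [Fm (Over C B)] @ G @ D2" D] wf m_overL by simp
    have ok1: "fseq_ok r ?X ((bangs z2 @ ?D1) @ Fm (Over C B) # (bangs z1 @ ?G) @ ?D2) D"
      by (rule fseq_ok_mset[OF _ ok]) (simp add: mset_bang_list ac_simps)
    have "fder r False (fill ?X ({#}, (bangs z2 @ ?D1) @ Fm (Over C B) # (bangs z1 @ ?G) @ ?D2), D)"
      by (rule fder_overL[OF p1 p2 ok1])
    then have "fder r False (fill ?X ({#}, [] @ (bangs z2 @ ?D1 @ [Fm (Over C B)]) @ bang_list (stoup_list z1) @ (?G @ ?D2)), D)"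
      by simp
    then have "fder r False (fill ?X ({#}, [] @ bang_list (stoup_list z1) @ (bangs z2 @ ?D1 @ [Fm (Over C B)]) @ (?G @ ?D2)), D)"
      by (rule fder_bangs_leftward)
    then have "fder r False (fill ?X ({#}, [] @ bang_list (stoup_list z1 @ stoup_list z2) @ (?D1 @ Fm (Over C B) # ?G @ ?D2)), D)"
      by simp
    then have "fder r False (fill ?X ({#}, [] @ bang_list (stoup_list (z1 + z2)) @ (?D1 @ Fm (Over C B) # ?G @ ?D2)), D)"
      by (rule fder_bangs_perm[rotated]) simp
    then show ?thesis using m_overL by (simp add: unstoup_fill unstoup_pair)
  next
    case (m_overR G z B C)
    have p: "fder r False (({#}, (bangs z @ map unstoup_t G) @ [Fm B]), C)"
      using IH[of "(z, G @ [Fm B])" C] m_overR by (simp add: unstoup_pair)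
    have c: "r \<longrightarrow> bangs z @ map unstoup_t G \<noteq> []" using m_overR bangs_eq_Nil_iff
      by auto
    have ok: "fseq_ok r Hole (bangs z @ map unstoup_t G) (Over C B)"
      using fseq_ok_unstoup_Hole[of r z G "Over C B"] wf m_overR by simp
    show ?thesis using fder_overR[OF c p ok] m_overR by (simp add: unstoup_pair)
  next
    case (m_underL z1 G A X z2 D1 C D2 D)
    let ?X = "unstoup_ctx X" and ?D1 = "map unstoup_t D1" and ?D2 = "map unstoup_t D2"
      and ?G = "map unstoup_t G"
    have p1: "fder r False (({#}, bangs z1 @ ?G), A)" using IH[of "(z1, G)" A] m_underL
      by (simp add: unstoup_pair)
    have p2: "fder r False (fill ?X ({#}, (bangs z2 @ ?D1) @ Fm C # ?D2), D)"
      using IH[of "fill X (z2, D1 @ [Fm C] @ D2)" D] m_underL by (simp add: unstoup_pair unstoup_fill)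
    have ok: "fseq_ok r ?X (bangs (z1 + z2) @ ?D1 @ ?G @ Fm (Under A C) # ?D2) D"
      using fseq_ok_unstoup[of r X "z1 + z2" "D1 @ G @ [Fm (Under A C)] @ D2" D] wf m_underL by simp
    have ok1: "fseq_ok r ?X ((bangs z2 @ ?D1) @ (bangs z1 @ ?G) @ Fm (Under A C) # ?D2) D"
      by (rule fseq_ok_mset[OF _ ok]) (simp add: mset_bang_list ac_simps)
    have "fder r False (fill ?X ({#}, (bangs z2 @ ?D1) @ (bangs z1 @ ?G) @ Fm (Under A C) # ?D2), D)"
      by (rule fder_underL[OF p1 p2 ok1])
    then have "fder r False (fill ?X ({#}, [] @ (bangs z2 @ ?D1) @ bang_list (stoup_list z1) @ (?G @ Fm (Under A C) # ?D2)), D)"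
      by simp
    then have "fder r False (fill ?X ({#}, [] @ bang_list (stoup_list z1) @ (bangs z2 @ ?D1) @ (?G @ Fm (Under A C) # ?D2)), D)"
      by (rule fder_bangs_leftward)
    then have "fder r False (fill ?X ({#}, [] @ bang_list (stoup_list z1 @ stoup_list z2) @ (?D1 @ ?G @ Fm (Under A C) # ?D2)), D)"
      by simp
    then have "fder r False (fill ?X ({#}, [] @ bang_list (stoup_list (z1 + z2)) @ (?D1 @ ?G @ Fm (Under A C) # ?D2)), D)"
      by (rule fder_bangs_perm[rotated]) simp
    then show ?thesis using m_underL by (simp add: unstoup_fill unstoup_pair)
  next
    case (m_underR G z A C)
    have p: "fder r False (fill Hole ({#}, [] @ bang_list (stoup_list z) @ [Fm A] @ map unstoup_t G), C)"
      using IH[of "(z, Fm A # G)" C] m_underR by (simp add: unstoup_pair)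
    then have "fder r False (fill Hole ({#}, [] @ [Fm A] @ bang_list (stoup_list z) @ map unstoup_t G), C)"
      by (rule fder_bangs_rightward)
    then have p': "fder r False (({#}, Fm A # (bangs z @ map unstoup_t G)), C)" by simp
    have c: "r \<longrightarrow> bangs z @ map unstoup_t G \<noteq> []" using m_underR bangs_eq_Nil_iff
      by auto
    have ok: "fseq_ok r Hole (bangs z @ map unstoup_t G) (Under A C)"
      using fseq_ok_unstoup_Hole[of r z G "Under A C"] wf m_underR by simp
    show ?thesis using fder_underR[OF c p' ok] m_underR by (simp add: unstoup_pair)
  next
    case (m_prodL X z D1 A B D2 D)
    have p: "fder r False (fill (unstoup_ctx X) ({#}, (bangs z @ map unstoup_t D1) @ Fm A # Fm B # map unstoup_t D2), D)"
      using IH[of "fill X (z, D1 @ [Fm A, Fm B] @ D2)" D] m_prodL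
        by (simp add: unstoup_pair unstoup_fill)
    have ok: "fseq_ok r (unstoup_ctx X) ((bangs z @ map unstoup_t D1) @ Fm (Prod A B) # map unstoup_t D2) D"
      using fseq_ok_unstoup[of r X z "D1 @ [Fm (Prod A B)] @ D2" D] wf m_prodL by simp
    show ?thesis using fder_prodL[OF p ok] m_prodL by (simp add: unstoup_fill unstoup_pair)
  next
    case (m_prodR z1 D A z2 G B)
    have p1: "fder r False (({#}, bangs z1 @ map unstoup_t D), A)" using IH[of "(z1, D)" A] m_prodR
      by (simp add: unstoup_pair)
    have p2: "fder r False (({#}, bangs z2 @ map unstoup_t G), B)" using IH[of "(z2, G)" B] m_prodR
      by (simp add: unstoup_pair)
    have ok: "fseq_ok r Hole (bangs (z1 + z2) @ map unstoup_t D @ map unstoup_t G) (Prod A B)"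
      using fseq_ok_unstoup_Hole[of r "z1 + z2" "D @ G" "Prod A B"] wf m_prodR by simp
    have ok1: "fseq_ok r Hole ((bangs z1 @ map unstoup_t D) @ (bangs z2 @ map unstoup_t G)) (Prod A B)"
      by (rule fseq_ok_mset[OF _ ok]) (simp add: mset_bang_list ac_simps)
    have "fder r False (({#}, (bangs z1 @ map unstoup_t D) @ (bangs z2 @ map unstoup_t G)), Prod A B)"
      by (rule fder_prodR[OF p1 p2 ok1])
    then have "fder r False (fill Hole ({#}, bangs z1 @ map unstoup_t D @ bang_list (stoup_list z2) @ map unstoup_t G), Prod A B)"
      by simp
    then have "fder r False (fill Hole ({#}, bangs z1 @ bang_list (stoup_list z2) @ map unstoup_t D @ map unstoup_t G), Prod A B)"
      by (rule fder_bangs_leftward)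
    then have "fder r False (fill Hole ({#}, [] @ bang_list (stoup_list z1 @ stoup_list z2) @ (map unstoup_t D @ map unstoup_t G)), Prod A B)"
      by simp
    then have "fder r False (fill Hole ({#}, [] @ bang_list (stoup_list (z1 + z2)) @ (map unstoup_t D @ map unstoup_t G)), Prod A B)"
      by (rule fder_bangs_perm[rotated]) simp
    then show ?thesis using m_prodR by (simp add: unstoup_pair)
  next
    case (m_oneL X z D1 D2 A)
    have p: "fder r False (fill (unstoup_ctx X) ({#}, (bangs z @ map unstoup_t D1) @ map unstoup_t D2), A)"
      using IH[of "fill X (z, D1 @ D2)" A] m_oneL by (simp add: unstoup_pair unstoup_fill)
    have ok: "fseq_ok r (unstoup_ctx X) ((bangs z @ map unstoup_t D1) @ Fm One # map unstoup_t D2) A"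
      using fseq_ok_unstoup[of r X z "D1 @ [Fm One] @ D2" A] wf m_oneL by simp
    show ?thesis using fder_oneL[OF _ p ok] m_oneL by (simp add: unstoup_fill unstoup_pair)
  next
    case (m_orL X z D1 A1 D2 C A2)
    have p1: "fder r False (fill (unstoup_ctx X) ({#}, (bangs z @ map unstoup_t D1) @ Fm A1 # map unstoup_t D2), C)"
      using IH[of "fill X (z, D1 @ [Fm A1] @ D2)" C] m_orL by (simp add: unstoup_pair unstoup_fill)
    have p2: "fder r False (fill (unstoup_ctx X) ({#}, (bangs z @ map unstoup_t D1) @ Fm A2 # map unstoup_t D2), C)"
      using IH[of "fill X (z, D1 @ [Fm A2] @ D2)" C] m_orL by (simp add: unstoup_pair unstoup_fill)
    have ok: "fseq_ok r (unstoup_ctx X) ((bangs z @ map unstoup_t D1) @ Fm (Or A1 A2) # map unstoup_t D2) C"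
      using fseq_ok_unstoup[of r X z "D1 @ [Fm (Or A1 A2)] @ D2" C] wf m_orL by simp
    show ?thesis using fder_orL[OF p1 p2 ok] m_orL by (simp add: unstoup_fill unstoup_pair)
  next
    case (m_orR1 Y A1 A2)
    have p: "fder r False (unstoup Y, A1)" using IH[of Y A1] m_orR1 by simp
    show ?thesis using fder_orR1[OF p, of A2] wf m_orR1 by (simp add: onefree_seq_iff)
  next
    case (m_orR2 Y A2 A1)
    have p: "fder r False (unstoup Y, A2)" using IH[of Y A2] m_orR2 by simp
    show ?thesis using fder_orR2[OF p, of A1] wf m_orR2 by (simp add: onefree_seq_iff)
  next
    case (m_andL1 X z D1 A1 D2 C A2)
    have p: "fder r False (fill (unstoup_ctx X) ({#}, (bangs z @ map unstoup_t D1) @ Fm A1 # map unstoup_t D2), C)"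
      using IH[of "fill X (z, D1 @ [Fm A1] @ D2)" C] m_andL1 by (simp add: unstoup_pair unstoup_fill)
    have ok: "fseq_ok r (unstoup_ctx X) ((bangs z @ map unstoup_t D1) @ Fm (And A1 A2) # map unstoup_t D2) C"
      using fseq_ok_unstoup[of r X z "D1 @ [Fm (And A1 A2)] @ D2" C] wf m_andL1 by simp
    show ?thesis using fder_andL1[OF p ok] m_andL1 by (simp add: unstoup_fill unstoup_pair)
  next
    case (m_andL2 X z D1 A2 D2 C A1)
    have p: "fder r False (fill (unstoup_ctx X) ({#}, (bangs z @ map unstoup_t D1) @ Fm A2 # map unstoup_t D2), C)"
      using IH[of "fill X (z, D1 @ [Fm A2] @ D2)" C] m_andL2 by (simp add: unstoup_pair unstoup_fill)
    have ok: "fseq_ok r (unstoup_ctx X) ((bangs z @ map unstoup_t D1) @ Fm (And A1 A2) # map unstoup_t D2) C"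
      using fseq_ok_unstoup[of r X z "D1 @ [Fm (And A1 A2)] @ D2" C] wf m_andL2 by simp
    show ?thesis using fder_andL2[OF p ok] m_andL2 by (simp add: unstoup_fill unstoup_pair)
  next
    case (m_andR Y A1 A2)
    have p1: "fder r False (unstoup Y, A1)" using IH[of Y A1] m_andR by simp
    have p2: "fder r False (unstoup Y, A2)" using IH[of Y A2] m_andR by simp
    show ?thesis using fder_andR[OF p1 p2] m_andR by simp
  next
    case (m_boxL X z D1 A D2 B)
    have p: "fder r False (fill (unstoup_ctx X) ({#}, (bangs z @ map unstoup_t D1) @ Fm A # map unstoup_t D2), B)"
      using IH[of "fill X (z, D1 @ [Fm A] @ D2)" B] m_boxL by (simp add: unstoup_pair unstoup_fill)
    have ok: "fseq_ok r (unstoup_ctx X) ((bangs z @ map unstoup_t D1) @ Br ({#}, [Fm (Box A)]) # map unstoup_t D2) B"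
      using fseq_ok_unstoup[of r X z "D1 @ [Br ({#}, [Fm (Box A)])] @ D2" B] wf m_boxL by simp
    show ?thesis using fder_boxL[OF p ok] m_boxL by (simp add: unstoup_fill unstoup_pair)
  next
    case (m_boxR Y A)
    have p: "fder r False (({#}, [Br (unstoup Y)]), A)" using IH[of "({#}, [Br Y])" A] m_boxR
      by (simp add: unstoup_pair unstoup_t_Br)
    show ?thesis using fder_boxR[OF p] m_boxR by simp
  next
    case (m_diaL X z D1 A D2 B)
    have p: "fder r False (fill (unstoup_ctx X) ({#}, (bangs z @ map unstoup_t D1) @ Br ({#}, [Fm A]) # map unstoup_t D2), B)"
      using IH[of "fill X (z, D1 @ [Br ({#}, [Fm A])] @ D2)" B] m_diaL
        by (simp add: unstoup_pair unstoup_fill)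
    have ok: "fseq_ok r (unstoup_ctx X) ((bangs z @ map unstoup_t D1) @ Fm (Dia A) # map unstoup_t D2) B"
      using fseq_ok_unstoup[of r X z "D1 @ [Fm (Dia A)] @ D2" B] wf m_diaL by simp
    show ?thesis using fder_diaL[OF p ok] m_diaL by (simp add: unstoup_fill unstoup_pair)
  next
    case (m_diaR Y A)
    have p: "fder r False (unstoup Y, A)" using IH[of Y A] m_diaR by simp
    show ?thesis using fder_diaR[OF p] m_diaR by (simp add: unstoup_pair unstoup_t_Br)
  next
    case (m_bangL X z A G1 G2 B)
    let ?X = "unstoup_ctx X"
    have p: "fder r False (fill ?X ({#}, [] @ bangs (z + {#A#}) @ (map unstoup_t G1 @ map unstoup_t G2)), B)"
      using IH[of "fill X (z + {#A#}, G1 @ G2)" B] m_bangL by (simp add: unstoup_pair unstoup_fill)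
    have "fder r False (fill ?X ({#}, [] @ bang_list (stoup_list z @ [A]) @ (map unstoup_t G1 @ map unstoup_t G2)), B)"
      by (rule fder_bangs_perm[OF _ p]) simp
    then have "fder r False (fill ?X ({#}, bangs z @ bang_list [A] @ map unstoup_t G1 @ map unstoup_t G2), B)"
      by simp
    then have "fder r False (fill ?X ({#}, bangs z @ map unstoup_t G1 @ bang_list [A] @ map unstoup_t G2), B)"
      by (rule fder_bangs_rightward)
    then show ?thesis using m_bangL by (simp add: unstoup_fill unstoup_pair)
  next
    case (m_bangP X z G1 A G2 B)
    let ?X = "unstoup_ctx X"
    have p: "fder r False (fill ?X ({#}, (bangs z @ map unstoup_t G1) @ Fm A # map unstoup_t G2), B)"
      using IH[of "fill X (z, G1 @ [Fm A] @ G2)" B] m_bangP by (simp add: unstoup_pair unstoup_fill)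
    have "fder r False (fill ?X ({#}, (bangs z @ map unstoup_t G1) @ Fm (Bang A) # map unstoup_t G2), B)"
      by (rule fder_bangL[OF p])
    then have "fder r False (fill ?X ({#}, bangs z @ map unstoup_t G1 @ bang_list [A] @ map unstoup_t G2), B)"
      by simp
    then have "fder r False (fill ?X ({#}, bangs z @ bang_list [A] @ map unstoup_t G1 @ map unstoup_t G2), B)"
      by (rule fder_bangs_leftward)
    then have "fder r False (fill ?X ({#}, [] @ bang_list (stoup_list z @ [A]) @ (map unstoup_t G1 @ map unstoup_t G2)), B)"
      by simp
    then have "fder r False (fill ?X ({#}, [] @ bangs (z + {#A#}) @ (map unstoup_t G1 @ map unstoup_t G2)), B)"
      by (rule fder_bangs_perm[rotated]) simp
    then show ?thesis using m_bangP by (simp add: unstoup_fill unstoup_pair)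
  next
    case (m_bangR A B)
    have p: "fder r False (({#}, [Fm (Bang A)]), B)" using IH[of "({#A#}, [])" B] m_bangR
      by (simp add: unstoup_pair)
    show ?thesis using fder_bangR[OF p] m_bangR by (simp add: unstoup_pair)
  next
    case (m_bangC G2 z' X z A G1 G3 B)
    let ?X = "unstoup_ctx X" and ?G1 = "map unstoup_t G1" and ?G2 = "map unstoup_t G2"
      and ?G3 = "map unstoup_t G3"
    have p: "fder r False (fill ?X ({#}, [] @ bangs (z + {#A#}) @ (?G1 @ Br ({#}, bangs (z' + {#A#}) @ ?G2) # ?G3)), B)"
      using IH[of "fill X (z + {#A#}, G1 @ [Br (z' + {#A#}, G2)] @ G3)" B] m_bangC
        by (simp add: unstoup_pair unstoup_fill)
    have "fder r False (fill ?X ({#}, [] @ bang_list (A # stoup_list z) @ (?G1 @ Br ({#}, bangs (z' + {#A#}) @ ?G2) # ?G3)), B)"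
      by (rule fder_bangs_perm[OF _ p]) simp
    then have "fder r False (fill (ctx_comp ?X (CBr {#} (Fm (Bang A) # bangs z @ ?G1) Hole ?G3)) ({#}, [] @ bangs (z' + {#A#}) @ ?G2), B)"
      by (simp add: fill_ctx_comp)
    then have "fder r False (fill (ctx_comp ?X (CBr {#} (Fm (Bang A) # bangs z @ ?G1) Hole ?G3)) ({#}, [] @ bang_list (A # stoup_list z') @ ?G2), B)"
      by (rule fder_bangs_perm[rotated]) simp
    then have q: "fder r False (fill ?X ({#}, Fm (Bang A) # (bangs z @ ?G1) @ Br ({#}, Fm (Bang A) # (bangs z' @ ?G2)) # ?G3), B)"
      by (simp add: fill_ctx_comp)
    have c: "r \<longrightarrow> bangs z' @ ?G2 \<noteq> []" using m_bangC bangs_eq_Nil_iff by auto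
    have "fder r False (fill ?X ({#}, Fm (Bang A) # (bangs z @ ?G1) @ Br ({#}, [Br ({#}, bangs z' @ ?G2)]) # ?G3), B)"
      by (rule fder_bangC[OF c q])
    then have "fder r False (fill ?X ({#}, [] @ bang_list (A # stoup_list z) @ (?G1 @ Br ({#}, [Br ({#}, bangs z' @ ?G2)]) # ?G3)), B)"
      by simp
    then have "fder r False (fill ?X ({#}, [] @ bangs (z + {#A#}) @ (?G1 @ Br ({#}, [Br ({#}, bangs z' @ ?G2)]) # ?G3)), B)"
      by (rule fder_bangs_perm[rotated]) simp
    then show ?thesis using m_bangC by (simp add: unstoup_fill unstoup_pair)
  next
    case m_cut
    then show ?thesis by simp
  qed
qed

section \<open>From F to M' with cut\<close>

lemma frule_cut_mono: "frule r False ps s \<Longrightarrow> frule r True ps s"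
  apply (induction rule: frule.induct)
                          prefer 25 apply simp
  apply (rule frule.intros, (assumption)?)+
  done

lemma mrule_cut_mono: "mrule r False ps s \<Longrightarrow> mrule r True ps s"
  apply (induction rule: mrule.induct)
                         prefer 24 apply simp
  apply (rule mrule.intros, (assumption)?)+
  done

lemma fder_cut_mono: "fder r False s \<Longrightarrow> fder r True s"
proof (induction rule: fder.induct)
  case (1 ps s)
  show ?case by (rule fder.intros[OF frule_cut_mono[OF 1(1)]]) (use 1 in auto)
qed

lemma mder_cut_mono: "mder r False s \<Longrightarrow> mder r True s"
proof (induction rule: mder.induct)
  case (1 ps s)
  show ?case by (rule mder.intros[OF mrule_cut_mono[OF 1(1)]]) (use 1 in auto)
qed

lemma mder_stoup_Bang:
  "(r \<Longrightarrow> onefree A) \<Longrightarrow> mder r True (({#A#}, []), Bang A)"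
proof -
  assume wfA: "r \<Longrightarrow> onefree A"
  have "mder r True (fill Hole ({#}, [] @ Fm A # []), A)" using mder_axI[of r A True] wfA by simp
  then have "mder r True (fill Hole ({#} + {#A#}, [] @ []), A)"
    by (rule mder_bangP) (use wfA in \<open>simp add: onefree_seq_def\<close>)
  then have "mder r True (({#A#}, []), A)" by simp
  then show ?thesis by (rule mder_bangR) (use wfA in \<open>simp add: onefree_seq_def\<close>)
qed

lemma fder_imp_mder: "fder r True s \<Longrightarrow> mder r True s"
proof (induction rule: fder.induct)
  case (1 ps s)
  have IH: "\<And>p. p \<in> set ps \<Longrightarrow> mder r True p" using 1(4) by blast
  have wf: "r \<Longrightarrow> onefree_seq s" using 1(3) by simp
  from 1(1) show ?case
  proof (cases rule: frule.cases)
    case (f_ax A)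
    then show ?thesis using mder_axI[of r A True] wf by (simp add: onefree_seq_def)
  next
    case f_oneR
    then show ?thesis using mder_ruleI[OF m_oneR[of r True]] by simp
  next
    case (f_overL G B X D1 C D2 D)
    then show ?thesis using mder_overL[of r True "{#}" G B X "{#}" D1 C D2 D] IH wf by simp
  next
    case (f_overR G B C)
    then show ?thesis using mder_overR[of r G "{#}" True B C] IH wf by simp
  next
    case (f_underL G A X D1 C D2 D)
    then show ?thesis using mder_underL[of r True "{#}" G A X "{#}" D1 C D2 D] IH wf by simp
  next
    case (f_underR G A C)
    then show ?thesis using mder_underR[of r G "{#}" True A C] IH wf by simp
  next
    case (f_prodL X D1 A B D2 D)
    then show ?thesis using mder_prodL[of r True X "{#}" D1 A B D2 D] IH wf by simp
  next
    case (f_prodR D A G B)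
    then show ?thesis using mder_prodR[of r True "{#}" D A "{#}" G B] IH wf by simp
  next
    case (f_oneL X D1 D2 A)
    then show ?thesis using mder_oneL[of r True X "{#}" D1 D2 A] IH by simp
  next
    case (f_orL X D1 A1 D2 C A2)
    then show ?thesis using mder_orL[of r True X "{#}" D1 A1 D2 C A2] IH wf by simp
  next
    case (f_orR1 Y A1 A2)
    then show ?thesis using mder_orR1[of r True Y A1 A2] IH wf by simp
  next
    case (f_orR2 Y A2 A1)
    then show ?thesis using mder_orR2[of r True Y A2 A1] IH wf by simp
  next
    case (f_andL1 X D1 A1 D2 C A2)
    then show ?thesis using mder_andL1[of r True X "{#}" D1 A1 D2 C A2] IH wf by simp
  next
    case (f_andL2 X D1 A2 D2 C A1)
    then show ?thesis using mder_andL2[of r True X "{#}" D1 A2 D2 C A1] IH wf by simp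
  next
    case (f_andR Y A1 A2)
    then show ?thesis using mder_andR[of r True Y A1 A2] IH wf by simp
  next
    case (f_boxL X D1 A D2 B)
    then show ?thesis using mder_boxL[of r True X "{#}" D1 A D2 B] IH wf by simp
  next
    case (f_boxR Y A)
    then show ?thesis using mder_boxR[of r True Y A] IH wf by simp
  next
    case (f_diaL X D1 A D2 B)
    then show ?thesis using mder_diaL[of r True X "{#}" D1 A D2 B] IH wf by simp
  next
    case (f_diaR Y A)
    then show ?thesis using mder_diaR[of r True Y A] IH wf by simp
  next
    case (f_bangL X D1 A D2 C)
    have p: "mder r True (fill X ({#}, D1 @ Fm A # D2), C)" using IH f_bangL by simp
    have wf': "r \<Longrightarrow> onefree_seq (fill X ({#}, D1 @ Fm (Bang A) # D2), C)" using wf f_bangL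
      by simp
    have "mder r True (fill X ({#} + {#A#}, D1 @ D2), C)"
      by (rule mder_bangP[OF p]) (use wf' in \<open>simp add: onefree_seq_iff onefree_meta_fill onefree_meta_pair\<close>)
    then have "mder r True (fill X ({#}, D1 @ Fm (Bang A) # D2), C)"
      by (rule mder_bangL) (use wf' in simp)
    then show ?thesis using f_bangL by simp
  next
    case (f_bangP1 X D1 A Phi D2 C)
    have p: "mder r True (fill X ({#}, D1 @ Fm (Bang A) # (Phi @ D2)), C)" using IH f_bangP1 by simp
    have wf': "r \<Longrightarrow> onefree_seq (fill X ({#}, D1 @ Phi @ Fm (Bang A) # D2), C)"
      using wf f_bangP1 by simp
    have wfA: "r \<Longrightarrow> onefree A" using wf'
      by (simp add: onefree_seq_iff onefree_meta_fill onefree_meta_pair)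
    have "mder r True (fill X ({#A#} + {#}, D1 @ [] @ (Phi @ D2)), C)"
      by (rule mder_cut[OF _ mder_stoup_Bang[OF wfA] p]) (use wf' in \<open>simp_all add: onefree_seq_iff onefree_meta_fill onefree_meta_pair\<close>)
    then have "mder r True (fill X ({#} + {#A#}, (D1 @ Phi) @ D2), C)" by simp
    then have "mder r True (fill X ({#}, (D1 @ Phi) @ Fm (Bang A) # D2), C)"
      by (rule mder_bangL) (use wf' in simp)
    then show ?thesis using f_bangP1 by simp
  next
    case (f_bangP2 X D1 Phi A D2 C)
    have p: "mder r True (fill X ({#}, (D1 @ Phi) @ Fm (Bang A) # D2), C)" using IH f_bangP2 by simp
    have wf': "r \<Longrightarrow> onefree_seq (fill X ({#}, D1 @ Fm (Bang A) # Phi @ D2), C)"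
      using wf f_bangP2 by simp
    have wfA: "r \<Longrightarrow> onefree A" using wf'
      by (simp add: onefree_seq_iff onefree_meta_fill onefree_meta_pair)
    have "mder r True (fill X ({#A#} + {#}, (D1 @ Phi) @ [] @ D2), C)"
      by (rule mder_cut[OF _ mder_stoup_Bang[OF wfA] p]) (use wf' in \<open>simp_all add: onefree_seq_iff onefree_meta_fill onefree_meta_pair\<close>)
    then have "mder r True (fill X ({#} + {#A#}, D1 @ (Phi @ D2)), C)" by simp
    then have "mder r True (fill X ({#}, D1 @ Fm (Bang A) # (Phi @ D2)), C)"
      by (rule mder_bangL) (use wf' in simp)
    then show ?thesis using f_bangP2 by simp
  next
    case (f_bangR A B)
    have p: "mder r True (fill Hole ({#}, [] @ Fm (Bang A) # []), B)" using IH f_bangR by simp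
    have wf': "r \<Longrightarrow> onefree_seq (({#}, [Fm (Bang A)]), Bang B)" using wf f_bangR by simp
    have wfA: "r \<Longrightarrow> onefree A" using wf' by (simp add: onefree_seq_iff onefree_meta_pair)
    have "mder r True (fill Hole ({#A#} + {#}, [] @ [] @ []), B)"
      by (rule mder_cut[OF _ mder_stoup_Bang[OF wfA] p]) (use wf' in \<open>simp_all add: onefree_seq_iff onefree_meta_pair\<close>)
    then have "mder r True (({#A#}, []), B)" by simp
    then have "mder r True (({#A#}, []), Bang B)"
      by (rule mder_bangR) (use wf' in \<open>simp add: onefree_seq_iff onefree_meta_pair\<close>)
    then have "mder r True (fill Hole ({#} + {#A#}, [] @ []), Bang B)" by simp
    then have "mder r True (fill Hole ({#}, [] @ Fm (Bang A) # []), Bang B)"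
      by (rule mder_bangL) (use wf' in simp)
    then show ?thesis using f_bangR by simp
  next
    case (f_bangC G2 X A G1 G3 C)
    let ?Y = "ctx_comp X (CBr {#} (Fm (Bang A) # G1) Hole G3)"
    have p: "mder r True (fill ?Y ({#}, [] @ Fm (Bang A) # G2), C)" using IH f_bangC
      by (simp add: fill_ctx_comp)
    have wf': "r \<Longrightarrow> onefree_seq (fill X ({#}, Fm (Bang A) # G1 @ Br ({#}, [Br ({#}, G2)]) # G3), C)"
      using wf f_bangC by simp
    have wf_parts: "r \<Longrightarrow> onefree_ctx X \<and> onefree A \<and> (\<forall>t\<in>set G1. onefree_t t) \<and> (\<forall>t\<in>set G2. onefree_t t) \<and> (\<forall>t\<in>set G3. onefree_t t) \<and> onefree C"
      using wf' by (simp add: onefree_seq_iff onefree_meta_fill onefree_meta_pair onefree_t_Br)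
    have wfA: "r \<Longrightarrow> onefree A" using wf_parts by simp
    have "mder r True (fill ?Y ({#A#} + {#}, [] @ [] @ G2), C)"
      by (rule mder_cut[OF _ mder_stoup_Bang[OF wfA] p]) (use wf_parts in \<open>simp_all add: onefree_seq_iff onefree_meta_fill onefree_meta_pair onefree_t_Br fill_ctx_comp, blast\<close>)
    then have q: "mder r True (fill X ({#}, [] @ Fm (Bang A) # (G1 @ Br ({#A#}, G2) # G3)), C)"
      by (simp add: fill_ctx_comp)
    have "mder r True (fill X ({#A#} + {#}, [] @ [] @ (G1 @ Br ({#A#}, G2) # G3)), C)"
      by (rule mder_cut[OF _ mder_stoup_Bang[OF wfA] q]) (use wf_parts in \<open>simp_all add: onefree_seq_iff onefree_meta_fill onefree_meta_pair onefree_t_Br, blast?\<close>)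
    then have "mder r True (fill X ({#} + {#A#}, G1 @ Br ({#} + {#A#}, G2) # G3), C)" by simp
    then have "mder r True (fill X ({#} + {#A#}, G1 @ Br ({#}, [Br ({#}, G2)]) # G3), C)"
      by (rule mder_bangC[rotated]) (use f_bangC wf_parts in \<open>simp_all add: onefree_seq_iff onefree_meta_fill onefree_meta_pair onefree_t_Br, blast?\<close>)
    then have "mder r True (fill X ({#} + {#A#}, [] @ (G1 @ Br ({#}, [Br ({#}, G2)]) # G3)), C)" by simp
    then have "mder r True (fill X ({#}, [] @ Fm (Bang A) # (G1 @ Br ({#}, [Br ({#}, G2)]) # G3)), C)"
      by (rule mder_bangL) (use wf' in simp)
    then show ?thesis using f_bangC by simp
  next
    case (f_cut P A X G1 G2 C)
    then show ?thesis using mder_cut[of True r "{#}" P A X "{#}" G1 G2 C] IH wf by simp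
  qed
qed

theorem proposition1:
  fixes Xi :: meta and C :: formula
  assumes "sfree Xi"
  shows "\<forall>r::bool.
     (fder r False (Xi, C) \<longleftrightarrow> fder r True (Xi, C)) \<and>
     (fder r True (Xi, C) \<longleftrightarrow> mder r True (Xi, C)) \<and>
     (mder r True (Xi, C) \<longleftrightarrow> mder r False (Xi, C))"
proof -
  have "fder r False (Xi, C)" if "mder r False (Xi, C)" for r
    using mder_imp_fder[OF that] unstoup_sfree[OF assms] by simp
  then show ?thesis using fder_imp_mder mder_cut_elim fder_cut_mono mder_cut_mono by blast
qed

end
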